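(* Every Temperley–Lieb diagram $x$ in $\mathcal{TL}_0(\Bbbk)$ can be written uniquely as $x=x_{\mathrm{cup}}\circ x_{\mathrm{cap}}$, where $x_{\mathrm{cup}}$ is a cup diagram and $x_{\mathrm{cap}}$ is a cap diagram.
   Context: $\Bbbk$ is a field. $\mathcal{TL}_0(\Bbbk)$ is the strict $\Bbbk$-linear monoidal category with objects $\mathbf 0,\mathbf 1,\dots$, $\mathbf m\otimes\mathbf n=\mathbf{m+n}$, whose morphisms are generated under composition, tensor product and linear combination by $\mathrm{cup}:\mathbf 0\to\mathbf 2$ and $\mathrm{cap}:\mathbf 2\to\mathbf 0$ subject to $(\mathrm{id}_{\mathbf 1}\otimes\mathrm{cap})\circ(\mathrm{cup}\otimes\mathrm{id}_{\mathbf 1})=0=(\mathrm{cap}\otimes\mathrm{id}_{\mathbf 1})\circ(\mathrm{id}_{\mathbf 1}\otimes\mathrm{cup})$ and $\mathrm{cap}\circ\mathrm{cup}=\mathrm{id}_{\mathbf 0}$. A Temperley–Lieb diagram is a nonzero morphism obtainable from $\mathrm{cup}$, $\mathrm{cap}$ and identity morphisms using only $\otimes$ and $\circ$; a cup diagram (resp. cap diagram) is a nonzero morphism obtainable in this way from $\mathrm{cup}$ (resp. $\mathrm{cap}$) and identity morphisms only. *)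

theory Defs
  imports Main
begin

text \<open>Syntactic morphism terms of the free strict monoidal category generated by
  cup : 0 -> 2 and cap : 2 -> 0.  Comp g f means g o f.\<close>
datatype tm = Cup | Cap | Idn nat | Comp tm tm | Tens tm tm

inductive typed :: "tm \<Rightarrow> nat \<Rightarrow> nat \<Rightarrow> bool" where
  "typed Cup 0 2"
| "typed Cap 2 0"
| "typed (Idn n) n n"
| "typed f a b \<Longrightarrow> typed g b c \<Longrightarrow> typed (Comp g f) a c"
| "typed f a b \<Longrightarrow> typed g c d \<Longrightarrow> typed (Tens f g) (a + c) (b + d)"

fun no_cap :: "tm \<Rightarrow> bool" where
  "no_cap Cup = True"
| "no_cap Cap = False"
| "no_cap (Idn n) = True"
| "no_cap (Comp g f) = (no_cap g \<and> no_cap f)"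
| "no_cap (Tens f g) = (no_cap f \<and> no_cap g)"

fun no_cup :: "tm \<Rightarrow> bool" where
  "no_cup Cup = False"
| "no_cup Cap = True"
| "no_cup (Idn n) = True"
| "no_cup (Comp g f) = (no_cup g \<and> no_cup f)"
| "no_cup (Tens f g) = (no_cup f \<and> no_cup g)"

text \<open>Formal k-linear combinations of terms are functions tm => k (finitely supported
  ones arise). The basis vector of a term: \<close>
definition ind :: "tm \<Rightarrow> tm \<Rightarrow> 'k::zero_neq_one" where
  "ind t = (\<lambda>s. if s = t then 1 else 0)"

text \<open>Bilinear extension of composition / tensor with a fixed basis term.\<close>
definition diff :: "(tm \<Rightarrow> 'k::ab_group_add) \<Rightarrow> (tm \<Rightarrow> 'k) \<Rightarrow> tm \<Rightarrow> 'k" where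
  "diff x y = (\<lambda>s. x s - y s)"

definition lcomp :: "tm \<Rightarrow> (tm \<Rightarrow> 'k::zero) \<Rightarrow> tm \<Rightarrow> 'k" where
  "lcomp t x = (\<lambda>s. case s of Comp t' u \<Rightarrow> if t' = t then x u else 0 | _ \<Rightarrow> 0)"
definition rcomp :: "(tm \<Rightarrow> 'k::zero) \<Rightarrow> tm \<Rightarrow> tm \<Rightarrow> 'k" where
  "rcomp x t = (\<lambda>s. case s of Comp u t' \<Rightarrow> if t' = t then x u else 0 | _ \<Rightarrow> 0)"
definition ltens :: "tm \<Rightarrow> (tm \<Rightarrow> 'k::zero) \<Rightarrow> tm \<Rightarrow> 'k" where
  "ltens t x = (\<lambda>s. case s of Tens t' u \<Rightarrow> if t' = t then x u else 0 | _ \<Rightarrow> 0)"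
definition rtens :: "(tm \<Rightarrow> 'k::zero) \<Rightarrow> tm \<Rightarrow> tm \<Rightarrow> 'k" where
  "rtens x t = (\<lambda>s. case s of Tens u t' \<Rightarrow> if t' = t then x u else 0 | _ \<Rightarrow> 0)"

text \<open>null m n x: the linear combination x of terms of type m -> n is zero in TL_0(k),
  i.e. lies in the tensor ideal generated by the strict monoidal category axioms and
  the defining relations of TL_0.\<close>
inductive null :: "nat \<Rightarrow> nat \<Rightarrow> (tm \<Rightarrow> 'k::field) \<Rightarrow> bool" where
  zig1: "null 1 1 (ind (Comp (Tens (Idn 1) Cap) (Tens Cup (Idn 1))))"
| zig2: "null 1 1 (ind (Comp (Tens Cap (Idn 1)) (Tens (Idn 1) Cup)))"
| circ: "null 0 0 (diff (ind (Comp Cap Cup)) (ind (Idn 0)))"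
| assoc: "typed f a b \<Longrightarrow> typed g b c \<Longrightarrow> typed h c d \<Longrightarrow>
     null a d (diff (ind (Comp h (Comp g f))) (ind (Comp (Comp h g) f)))"
| idl: "typed f a b \<Longrightarrow> null a b (diff (ind (Comp (Idn b) f)) (ind f))"
| idr: "typed f a b \<Longrightarrow> null a b (diff (ind (Comp f (Idn a))) (ind f))"
| tassoc: "typed f a b \<Longrightarrow> typed g c d \<Longrightarrow> typed h e p \<Longrightarrow>
     null (a + c + e) (b + d + p) (diff (ind (Tens (Tens f g) h)) (ind (Tens f (Tens g h))))"
| tunitl: "typed f a b \<Longrightarrow> null a b (diff (ind (Tens (Idn 0) f)) (ind f))"
| tunitr: "typed f a b \<Longrightarrow> null a b (diff (ind (Tens f (Idn 0))) (ind f))"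
| tid: "null (m + n) (m + n) (diff (ind (Tens (Idn m) (Idn n))) (ind (Idn (m + n))))"
| interchange: "typed f a b \<Longrightarrow> typed g b c \<Longrightarrow> typed h d e \<Longrightarrow> typed k e p \<Longrightarrow>
     null (a + d) (c + p) (diff (ind (Tens (Comp g f) (Comp k h))) (ind (Comp (Tens g k) (Tens f h))))"
| zero: "null m n (\<lambda>s. 0)"
| add: "null m n x \<Longrightarrow> null m n y \<Longrightarrow> null m n (\<lambda>s. x s + y s)"
| smult: "null m n x \<Longrightarrow> null m n (\<lambda>s. c * x s)"
| lcomp: "null m n x \<Longrightarrow> typed t n p \<Longrightarrow> null m p (lcomp t x)"
| rcomp: "null m n x \<Longrightarrow> typed t p m \<Longrightarrow> null p n (rcomp x t)"
| ltens: "null m n x \<Longrightarrow> typed t p q \<Longrightarrow> null (p + m) (q + n) (ltens t x)"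
| rtens: "null m n x \<Longrightarrow> typed t p q \<Longrightarrow> null (m + p) (n + q) (rtens x t)"

definition tl_eq :: "'k::field itself \<Rightarrow> nat \<Rightarrow> nat \<Rightarrow> tm \<Rightarrow> tm \<Rightarrow> bool" where
  "tl_eq K m n s t = null m n (diff (ind s) (ind t :: tm \<Rightarrow> 'k))"

definition tl_nonzero :: "'k::field itself \<Rightarrow> nat \<Rightarrow> nat \<Rightarrow> tm \<Rightarrow> bool" where
  "tl_nonzero K m n t = (\<not> null m n (ind t :: tm \<Rightarrow> 'k))"

end

theory Submission
  imports Defs
begin

text \<open>Terms act on words (lists of natural numbers) by partial maps: \<open>Cup\<close> inserts the
  letters \<open>0 1\<close> and \<open>Cap\<close> deletes an adjacent pair \<open>0 1\<close>.  Extended linearly, this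
  word representation kills every null combination (the zigzags act as the empty map, the
  circle as the identity), so equal morphisms act identically on words.

  Existence: sliding caps down past cups turns every term into zero or a composite
  (cups) \<open>\<circ>\<close> (caps), because a cap meeting a cup either cancels it (circle), produces a
  zigzag (zero) or commutes with it (interchange law).

  Uniqueness: far-apart cups commute, so the positions of the cups of a cup diagram can be
  put in a canonical order; the same holds for caps.  Feeding the word \<open>2 2 \<dots> 2\<close>, whose
  letters no cap can delete, into (cups) \<open>\<circ>\<close> (caps) recovers the number of through strands
  and both canonical position lists from the action alone.\<close>

section \<open>Typing and the word representation\<close>

fun src :: "tm \<Rightarrow> nat" where
  "src Cup = 0" | "src Cap = 2" | "src (Idn n) = n" | "src (Comp g f) = src f"
| "src (Tens f g) = src f + src g"

fun tgt :: "tm \<Rightarrow> nat" where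
  "tgt Cup = 2" | "tgt Cap = 0" | "tgt (Idn n) = n" | "tgt (Comp g f) = tgt g"
| "tgt (Tens f g) = tgt f + tgt g"

fun well_typed :: "tm \<Rightarrow> bool" where
  "well_typed Cup = True" | "well_typed Cap = True" | "well_typed (Idn n) = True"
| "well_typed (Comp g f) = (well_typed g \<and> well_typed f \<and> src g = tgt f)"
| "well_typed (Tens f g) = (well_typed f \<and> well_typed g)"

lemma typed_iff: "typed t m n \<longleftrightarrow> well_typed t \<and> src t = m \<and> tgt t = n"
proof
  assume "typed t m n" then show "well_typed t \<and> src t = m \<and> tgt t = n"
    by (induction rule: typed.induct) auto
next
  assume "well_typed t \<and> src t = m \<and> tgt t = n" then show "typed t m n"
  proof (induction t arbitrary: m n)
    case (Comp g f) then show ?case by (auto intro: typed.intros)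
  next
    case (Tens f g) then show ?case by (auto intro: typed.intros)
  qed (auto intro: typed.intros)
qed

fun sem :: "tm \<Rightarrow> nat list \<Rightarrow> nat list option" where
  "sem Cup w = (if w = [] then Some [0, 1] else None)"
| "sem Cap w = (if w = [0, 1] then Some [] else None)"
| "sem (Idn n) w = (if length w = n then Some w else None)"
| "sem (Comp g f) w = (case sem f w of None \<Rightarrow> None | Some v \<Rightarrow> sem g v)"
| "sem (Tens f g) w = (case sem f (take (src f) w) of None \<Rightarrow> None
     | Some a \<Rightarrow> (case sem g (drop (src f) w) of None \<Rightarrow> None | Some b \<Rightarrow> Some (a @ b)))"

lemma sem_length: "well_typed t \<Longrightarrow> sem t w = Some v \<Longrightarrow> length w = src t \<and> length v = tgt t"
proof (induction t arbitrary: w v)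
  case (Comp g f) then show ?case by (auto split: option.splits)
next
  case (Tens f g)
  then show ?case
  proof (cases "sem f (take (src f) w)")
    case (Some a)
    then show ?thesis using Tens
      by (cases "sem g (drop (src f) w)") (fastforce simp: min_def split: if_splits)+
  qed simp
qed (auto split: if_splits)

lemma sem_tassoc: "sem (Tens (Tens f g) h) = sem (Tens f (Tens g h))"
  by (rule ext) (simp add: take_take drop_take add.commute split: option.splits)

lemma sem_idl: "well_typed f \<Longrightarrow> sem (Comp (Idn (tgt f)) f) = sem f"
  by (rule ext) (auto split: option.splits dest: sem_length)

lemma sem_idr:
  assumes "well_typed f"
  shows "sem (Comp f (Idn (src f))) = sem f"
proof (rule ext)
  fix w
  show "sem (Comp f (Idn (src f))) w = sem f w"
    using assms by (cases "sem f w") (auto dest: sem_length)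
qed

lemma sem_tunitl: "sem (Tens (Idn 0) f) = sem f"
  by (rule ext) (auto split: option.splits)

lemma sem_tunitr:
  assumes "well_typed f"
  shows "sem (Tens f (Idn 0)) = sem f"
proof (rule ext)
  fix w
  show "sem (Tens f (Idn 0)) w = sem f w"
  proof (cases "length w \<le> src f")
    case False
    then have "sem f w = None" using sem_length[OF assms, of w] by (cases "sem f w") auto
    then show ?thesis using False by (auto split: option.splits)
  qed (auto split: option.splits)
qed

lemma sem_tid: "sem (Tens (Idn m) (Idn n)) = sem (Idn (m + n))"
  by (rule ext) (auto split: option.splits)

lemma sem_interchange:
  assumes "well_typed f" "src g = tgt f"
  shows "sem (Tens (Comp g f) (Comp k h)) = sem (Comp (Tens g k) (Tens f h))"
proof (rule ext)
  fix w
  show "sem (Tens (Comp g f) (Comp k h)) w = sem (Comp (Tens g k) (Tens f h)) w"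
  proof (cases "sem f (take (src f) w)")
    case (Some a)
    then have "length a = src g" using sem_length[OF assms(1)] assms(2) by auto
    with Some show ?thesis by (auto split: option.splits)
  qed simp
qed

definition supp :: "(tm \<Rightarrow> 'k::zero) \<Rightarrow> tm set" where
  "supp x = {s. x s \<noteq> 0}"

definition word_matrix :: "(tm \<Rightarrow> 'k::field) \<Rightarrow> nat list \<Rightarrow> nat list \<Rightarrow> 'k" where
  "word_matrix x u v = (\<Sum>s\<in>supp x. x s * of_bool (sem s u = Some v))"

definition word_null :: "nat \<Rightarrow> nat \<Rightarrow> (tm \<Rightarrow> 'k::field) \<Rightarrow> bool" where
  "word_null m n x \<longleftrightarrow> finite (supp x) \<and> (\<forall>s\<in>supp x. typed s m n) \<and> (\<forall>u v. word_matrix x u v = 0)"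

lemma word_matrix_superset:
  assumes "finite S" "supp x \<subseteq> S"
  shows "word_matrix x u v = (\<Sum>s\<in>S. x s * of_bool (sem s u = Some v))"
  unfolding word_matrix_def
  by (rule sum.mono_neutral_left) (use assms in \<open>auto simp: supp_def\<close>)

lemma word_null_diff:
  assumes "typed s m n" "typed t m n" "sem s = sem t"
  shows "word_null m n (diff (ind s) (ind t) :: tm \<Rightarrow> 'k::field)"
proof (cases "s = t")
  case True
  then show ?thesis using assms by (auto simp: word_null_def supp_def diff_def word_matrix_def)
next
  case False
  have sp: "supp (diff (ind s) (ind t) :: tm \<Rightarrow> 'k) \<subseteq> {s, t}"
    by (auto simp: supp_def diff_def ind_def)
  have "word_matrix (diff (ind s) (ind t) :: tm \<Rightarrow> 'k) u v = 0" for u v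
    using False assms(3)
    by (subst word_matrix_superset[OF _ sp]) (auto simp: diff_def ind_def of_bool_def)
  then show ?thesis using sp assms finite_subset[OF sp] by (auto simp: word_null_def)
qed

lemma word_null_ind:
  assumes "typed s m n" "\<And>u. sem s u = None"
  shows "word_null m n (ind s :: tm \<Rightarrow> 'k::field)"
proof -
  have sp: "supp (ind s :: tm \<Rightarrow> 'k) \<subseteq> {s}" by (auto simp: supp_def ind_def)
  have "word_matrix (ind s :: tm \<Rightarrow> 'k) u v = 0" for u v
    using assms(2) by (subst word_matrix_superset[OF _ sp]) (auto simp: ind_def)
  then show ?thesis using sp assms finite_subset[OF sp] by (auto simp: word_null_def)
qed

lemma word_null_zero: "word_null m n (\<lambda>s. 0 :: 'k::field)"
  by (auto simp: word_null_def supp_def word_matrix_def)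

lemma word_null_add:
  assumes x: "word_null m n x" and y: "word_null m n y"
  shows "word_null m n (\<lambda>s. x s + y s)"
proof -
  have sp: "supp (\<lambda>s. x s + y s) \<subseteq> supp x \<union> supp y" by (auto simp: supp_def)
  have fin: "finite (supp x \<union> supp y)" using x y by (auto simp: word_null_def)
  have "word_matrix (\<lambda>s. x s + y s) u v = word_matrix x u v + word_matrix y u v" for u v
    using word_matrix_superset[OF fin sp] word_matrix_superset[OF fin, of x]
      word_matrix_superset[OF fin, of y]
    by (simp add: distrib_right sum.distrib)
  then show ?thesis using x y sp finite_subset[OF sp fin] by (auto simp: word_null_def)
qed

lemma word_null_smult:
  assumes x: "word_null m n x"
  shows "word_null m n (\<lambda>s. c * x s)"
proof -
  have sp: "supp (\<lambda>s. c * x s) \<subseteq> supp x" by (auto simp: supp_def)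
  have fin: "finite (supp x)" using x by (auto simp: word_null_def)
  have "word_matrix (\<lambda>s. c * x s) u v = c * word_matrix x u v" for u v
    using word_matrix_superset[OF fin sp]
    by (simp add: word_matrix_def sum_distrib_left mult.assoc)
  then show ?thesis using x sp finite_subset[OF sp fin] by (auto simp: word_null_def)
qed

text \<open>The four ideal operations \<open>lcomp\<close>, \<open>rcomp\<close>, \<open>ltens\<close>, \<open>rtens\<close> all move the
  coefficients of a combination along an injective map \<open>g\<close> on terms.\<close>

lemma word_null_image:
  fixes x y :: "tm \<Rightarrow> 'k::field"
  assumes x: "word_null m n x" and g: "inj g"
    and y_g: "\<And>s. y (g s) = x s" and y_0: "\<And>s. s \<notin> range g \<Longrightarrow> y s = 0"
    and typed_g: "\<And>s. typed s m n \<Longrightarrow> typed (g s) m' n'"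
    and sum_0: "\<And>u v. (\<Sum>s\<in>supp x. x s * of_bool (sem (g s) u = Some v)) = 0"
  shows "word_null m' n' y"
proof -
  have sp: "supp y \<subseteq> g ` supp x"
  proof
    fix s assume "s \<in> supp y"
    then obtain r where "s = g r" using y_0 by (auto simp: supp_def)
    then show "s \<in> g ` supp x" using \<open>s \<in> supp y\<close> y_g by (auto simp: supp_def)
  qed
  have fin: "finite (g ` supp x)" using x by (simp add: word_null_def)
  have "word_matrix y u v = (\<Sum>s\<in>supp x. x s * of_bool (sem (g s) u = Some v))" for u v
  proof -
    have "word_matrix y u v = (\<Sum>s\<in>g ` supp x. y s * of_bool (sem s u = Some v))"
      by (rule word_matrix_superset[OF fin sp])
    also have "\<dots> = (\<Sum>s\<in>supp x. x s * of_bool (sem (g s) u = Some v))"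
      using g by (subst sum.reindex) (auto simp: inj_on_def inj_def y_g)
    finally show ?thesis .
  qed
  moreover have "\<forall>s\<in>supp y. typed s m' n'"
    using sp x typed_g by (force simp: word_null_def)
  ultimately show ?thesis using finite_subset[OF sp fin] sum_0 by (simp add: word_null_def)
qed

lemma word_null_lcomp:
  fixes x :: "tm \<Rightarrow> 'k::field"
  assumes x: "word_null m n x" and t: "typed t n p"
  shows "word_null m p (lcomp t x)"
proof (rule word_null_image[OF x, where g = "Comp t"])
  fix u v
  have fin: "finite (supp x)" using x by (simp add: word_null_def)
  define W where "W = (\<lambda>s. the (sem s u)) ` supp x"
  have finW: "finite W" using fin by (simp add: W_def)
  \<comment> \<open>the matrix of a composite is the product of the matrices\<close>
  have factor: "(of_bool (sem (Comp t s) u = Some v) :: 'k)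
      = (\<Sum>w\<in>W. of_bool (sem s u = Some w) * of_bool (sem t w = Some v))"
    if "s \<in> supp x" for s
  proof (cases "sem s u")
    case (Some w0)
    then have "w0 \<in> W" using that by (force simp: W_def)
    moreover have "(\<Sum>w\<in>W. of_bool (sem s u = Some w) * of_bool (sem t w = Some v))
        = (\<Sum>w\<in>W. if w0 = w then of_bool (sem t w = Some v) else (0::'k))"
      using Some by (intro sum.cong) auto
    ultimately show ?thesis using Some finW by simp
  qed simp
  have "(\<Sum>s\<in>supp x. x s * of_bool (sem (Comp t s) u = Some v))
      = (\<Sum>s\<in>supp x. \<Sum>w\<in>W. x s * of_bool (sem s u = Some w) * of_bool (sem t w = Some v))"
    by (intro sum.cong refl) (simp add: factor sum_distrib_left mult.assoc del: sem.simps)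
  also have "\<dots> = (\<Sum>w\<in>W. word_matrix x u w * of_bool (sem t w = Some v))"
    by (subst sum.swap) (simp add: word_matrix_def sum_distrib_right)
  also have "\<dots> = 0" using x by (simp add: word_null_def)
  finally show "(\<Sum>s\<in>supp x. x s * of_bool (sem (Comp t s) u = Some v)) = 0" .
qed (use t in \<open>auto simp: inj_def lcomp_def typed_iff split: tm.splits\<close>)

lemma word_null_rcomp:
  fixes x :: "tm \<Rightarrow> 'k::field"
  assumes x: "word_null m n x" and t: "typed t p m"
  shows "word_null p n (rcomp x t)"
proof (rule word_null_image[OF x, where g = "\<lambda>s. Comp s t"])
  fix u v
  show "(\<Sum>s\<in>supp x. x s * of_bool (sem (Comp s t) u = Some v)) = 0"
  proof (cases "sem t u")
    case (Some w)
    then have "(\<Sum>s\<in>supp x. x s * of_bool (sem (Comp s t) u = Some v)) = word_matrix x w v"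
      by (simp add: word_matrix_def)
    then show ?thesis using x by (simp add: word_null_def)
  qed simp
qed (use t in \<open>auto simp: inj_def rcomp_def typed_iff split: tm.splits\<close>)

lemma word_null_ltens:
  fixes x :: "tm \<Rightarrow> 'k::field"
  assumes x: "word_null m n x" and t: "typed t p q"
  shows "word_null (p + m) (q + n) (ltens t x)"
proof (rule word_null_image[OF x, where g = "Tens t"])
  fix u v
  show "(\<Sum>s\<in>supp x. x s * of_bool (sem (Tens t s) u = Some v)) = 0"
  proof (cases "sem t (take (src t) u)")
    case (Some a)
    have split: "(a @ b = v) \<longleftrightarrow> (take (length a) v = a \<and> b = drop (length a) v)" for b
      by (metis append_eq_conv_conj)
    have "(\<Sum>s\<in>supp x. x s * of_bool (sem (Tens t s) u = Some v))
        = (\<Sum>s\<in>supp x. of_bool (take (length a) v = a)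
              * (x s * of_bool (sem s (drop (src t) u) = Some (drop (length a) v))))"
      using Some by (intro sum.cong refl) (auto simp: of_bool_def split split: option.splits)
    also have "\<dots> = of_bool (take (length a) v = a)
        * word_matrix x (drop (src t) u) (drop (length a) v)"
      by (simp add: word_matrix_def sum_distrib_left)
    finally have "(\<Sum>s\<in>supp x. x s * of_bool (sem (Tens t s) u = Some v)) = \<dots>" .
    then show ?thesis using x by (simp add: word_null_def)
  qed simp
qed (use t in \<open>auto simp: inj_def ltens_def typed_iff split: tm.splits\<close>)

lemma word_null_rtens:
  fixes x :: "tm \<Rightarrow> 'k::field"
  assumes x: "word_null m n x" and t: "typed t p q"
  shows "word_null (m + p) (n + q) (rtens x t)"
proof (rule word_null_image[OF x, where g = "\<lambda>s. Tens s t"])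
  fix u v
  have src_m: "src s = m" if "s \<in> supp x" for s
    using x that by (auto simp: word_null_def typed_iff)
  show "(\<Sum>s\<in>supp x. x s * of_bool (sem (Tens s t) u = Some v)) = 0"
  proof (cases "sem t (drop m u)")
    case (Some b)
    define c where "c = length v - length b"
    have split: "(a @ b = v) \<longleftrightarrow> (length b \<le> length v \<and> drop c v = b \<and> a = take c v)" for a
      unfolding c_def by (metis append_take_drop_id append_eq_conv_conj diff_add_inverse2
          le_add2 length_append)
    have "(\<Sum>s\<in>supp x. x s * of_bool (sem (Tens s t) u = Some v))
        = (\<Sum>s\<in>supp x. of_bool (length b \<le> length v \<and> drop c v = b)
              * (x s * of_bool (sem s (take m u) = Some (take c v))))"
      using Some src_m
      by (intro sum.cong refl) (auto simp: of_bool_def split split: option.splits)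
    also have "\<dots> = of_bool (length b \<le> length v \<and> drop c v = b)
        * word_matrix x (take m u) (take c v)"
      by (simp add: word_matrix_def sum_distrib_left)
    finally have "(\<Sum>s\<in>supp x. x s * of_bool (sem (Tens s t) u = Some v)) = \<dots>" .
    then show ?thesis using x by (simp add: word_null_def)
  next
    case None
    then show ?thesis using src_m by (auto split: option.splits intro!: sum.neutral)
  qed
qed (use t in \<open>auto simp: inj_def rtens_def typed_iff split: tm.splits\<close>)

lemma null_word_null: "null m n (x :: tm \<Rightarrow> 'k::field) \<Longrightarrow> word_null m n x"
proof (induction rule: null.induct)
  case (idl f a b)
  then show ?case by (intro word_null_diff) (auto simp: typed_iff sem_idl)
next
  case (idr f a b)
  then show ?case by (intro word_null_diff) (auto simp: typed_iff sem_idr)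
next
  case (tunitr f a b)
  then show ?case by (intro word_null_diff) (auto simp: typed_iff sem_tunitr)
next
  case (interchange f a b g c h d e k p)
  then show ?case by (intro word_null_diff) (auto simp: typed_iff sem_interchange)
qed (auto intro!: word_null_ind word_null_diff word_null_zero word_null_add word_null_smult
    word_null_lcomp word_null_rcomp word_null_ltens word_null_rtens
    simp: typed_iff sem_tassoc sem_tunitl sem_tid split: option.splits)

section \<open>Equality and vanishing of terms in \<open>TL\<^sub>0\<close>\<close>

definition tl_equiv :: "'k::field itself \<Rightarrow> tm \<Rightarrow> tm \<Rightarrow> bool" where
  "tl_equiv K s t \<longleftrightarrow> well_typed s \<and> well_typed t \<and> src s = src t \<and> tgt s = tgt t
      \<and> null (src s) (tgt s) (diff (ind s) (ind t) :: tm \<Rightarrow> 'k)"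

definition tl_zero :: "'k::field itself \<Rightarrow> tm \<Rightarrow> bool" where
  "tl_zero K t \<longleftrightarrow> well_typed t \<and> null (src t) (tgt t) (ind t :: tm \<Rightarrow> 'k)"

lemma tl_eq_iff_tl_equiv:
  "typed s m n \<Longrightarrow> typed t m n \<Longrightarrow> tl_eq K m n s t \<longleftrightarrow> tl_equiv K s t"
  by (auto simp: tl_eq_def tl_equiv_def typed_iff)

lemma tl_nonzero_iff: "typed s m n \<Longrightarrow> tl_nonzero K m n s \<longleftrightarrow> \<not> tl_zero K s"
  by (auto simp: tl_nonzero_def tl_zero_def typed_iff)

context
  fixes K :: "'k::field itself"
begin

lemma tl_equiv_typing:
  "tl_equiv K s t \<Longrightarrow> well_typed s \<and> well_typed t \<and> src s = src t \<and> tgt s = tgt t"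
  by (simp add: tl_equiv_def)

lemma tl_equiv_refl: "well_typed s \<Longrightarrow> tl_equiv K s s"
  using null.zero[of "src s" "tgt s"] by (simp add: tl_equiv_def diff_def)

lemma tl_equiv_sym:
  assumes "tl_equiv K s t"
  shows "tl_equiv K t s"
proof -
  have "diff (ind t) (ind s) = (\<lambda>u. (-1) * diff (ind s) (ind t) u :: 'k)"
    by (auto simp: diff_def)
  then show ?thesis
    using assms null.smult[of "src s" "tgt s" "diff (ind s) (ind t) :: tm \<Rightarrow> 'k" "-1"]
    by (auto simp: tl_equiv_def)
qed

lemma tl_equiv_trans [trans]:
  assumes "tl_equiv K s t" "tl_equiv K t u"
  shows "tl_equiv K s u"
proof -
  have "diff (ind s) (ind u) = (\<lambda>v. diff (ind s) (ind t) v + diff (ind t) (ind u) v :: 'k)"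
    by (auto simp: diff_def)
  then show ?thesis
    using assms
      null.add[of "src s" "tgt s" "diff (ind s) (ind t) :: tm \<Rightarrow> 'k" "diff (ind t) (ind u)"]
    by (auto simp: tl_equiv_def)
qed

lemma tl_equiv_compL:
  assumes "tl_equiv K s t" "well_typed g" "src g = tgt s"
  shows "tl_equiv K (Comp g s) (Comp g t)"
proof -
  have "lcomp g (diff (ind s) (ind t) :: tm \<Rightarrow> 'k) = diff (ind (Comp g s)) (ind (Comp g t))"
    by (rule ext) (auto simp: lcomp_def diff_def ind_def split: tm.splits)
  then show ?thesis
    using assms null.lcomp[of "src s" "tgt s" "diff (ind s) (ind t) :: tm \<Rightarrow> 'k" g "tgt g"]
    by (auto simp: tl_equiv_def typed_iff)
qed

lemma tl_equiv_compR:
  assumes "tl_equiv K s t" "well_typed f" "tgt f = src s"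
  shows "tl_equiv K (Comp s f) (Comp t f)"
proof -
  have "rcomp (diff (ind s) (ind t) :: tm \<Rightarrow> 'k) f = diff (ind (Comp s f)) (ind (Comp t f))"
    by (rule ext) (auto simp: rcomp_def diff_def ind_def split: tm.splits)
  then show ?thesis
    using assms null.rcomp[of "src s" "tgt s" "diff (ind s) (ind t) :: tm \<Rightarrow> 'k" f "src f"]
    by (auto simp: tl_equiv_def typed_iff)
qed

lemma tl_equiv_tensL:
  assumes "tl_equiv K s t" "well_typed g"
  shows "tl_equiv K (Tens g s) (Tens g t)"
proof -
  have "ltens g (diff (ind s) (ind t) :: tm \<Rightarrow> 'k) = diff (ind (Tens g s)) (ind (Tens g t))"
    by (rule ext) (auto simp: ltens_def diff_def ind_def split: tm.splits)
  then show ?thesis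
    using assms null.ltens[of "src s" "tgt s" "diff (ind s) (ind t) :: tm \<Rightarrow> 'k" g "src g" "tgt g"]
    by (auto simp: tl_equiv_def typed_iff)
qed

lemma tl_equiv_tensR:
  assumes "tl_equiv K s t" "well_typed g"
  shows "tl_equiv K (Tens s g) (Tens t g)"
proof -
  have "rtens (diff (ind s) (ind t) :: tm \<Rightarrow> 'k) g = diff (ind (Tens s g)) (ind (Tens t g))"
    by (rule ext) (auto simp: rtens_def diff_def ind_def split: tm.splits)
  then show ?thesis
    using assms null.rtens[of "src s" "tgt s" "diff (ind s) (ind t) :: tm \<Rightarrow> 'k" g "src g" "tgt g"]
    by (auto simp: tl_equiv_def typed_iff)
qed

lemma tl_equiv_comp:
  "tl_equiv K s s' \<Longrightarrow> tl_equiv K t t' \<Longrightarrow> src s = tgt t \<Longrightarrow> tl_equiv K (Comp s t) (Comp s' t')"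
  by (metis tl_equiv_compL tl_equiv_compR tl_equiv_trans tl_equiv_typing)

lemma tl_equiv_tens:
  "tl_equiv K s s' \<Longrightarrow> tl_equiv K t t' \<Longrightarrow> tl_equiv K (Tens s t) (Tens s' t')"
  by (metis tl_equiv_tensL tl_equiv_tensR tl_equiv_trans tl_equiv_typing)

lemma tl_assoc:
  "well_typed f \<Longrightarrow> well_typed g \<Longrightarrow> well_typed h \<Longrightarrow> src g = tgt f \<Longrightarrow> src h = tgt g \<Longrightarrow>
    tl_equiv K (Comp h (Comp g f)) (Comp (Comp h g) f)"
  using null.assoc[of f "src f" "tgt f" g "tgt g" h "tgt h"] by (auto simp: tl_equiv_def typed_iff)

lemma tl_reassoc:
  assumes "well_typed d" "well_typed u" "well_typed c" "well_typed y"
    and "src d = tgt u" "src u = tgt c" "src c = tgt y"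
  shows "tl_equiv K (Comp d (Comp (Comp u c) y)) (Comp (Comp d u) (Comp c y))"
proof -
  have "tl_equiv K (Comp d (Comp (Comp u c) y)) (Comp d (Comp u (Comp c y)))"
    using assms by (intro tl_equiv_compL tl_equiv_sym[OF tl_assoc]) auto
  also have "tl_equiv K \<dots> (Comp (Comp d u) (Comp c y))"
    using assms by (intro tl_assoc) auto
  finally show ?thesis .
qed

lemma tl_idl: "well_typed f \<Longrightarrow> tl_equiv K (Comp (Idn (tgt f)) f) f"
  using null.idl[of f "src f" "tgt f"] by (auto simp: tl_equiv_def typed_iff)

lemma tl_idr: "well_typed f \<Longrightarrow> tl_equiv K (Comp f (Idn (src f))) f"
  using null.idr[of f "src f" "tgt f"] by (auto simp: tl_equiv_def typed_iff)

lemma tl_idn_idn: "tl_equiv K (Comp (Idn n) (Idn n)) (Idn n)"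
  using tl_idl[of "Idn n"] by simp

lemma tl_tassoc:
  "well_typed f \<Longrightarrow> well_typed g \<Longrightarrow> well_typed h \<Longrightarrow>
    tl_equiv K (Tens (Tens f g) h) (Tens f (Tens g h))"
  using null.tassoc[of f "src f" "tgt f" g "src g" "tgt g" h "src h" "tgt h"]
  by (auto simp: tl_equiv_def typed_iff add.assoc)

lemma tl_tunitl: "well_typed f \<Longrightarrow> tl_equiv K (Tens (Idn 0) f) f"
  using null.tunitl[of f "src f" "tgt f"] by (auto simp: tl_equiv_def typed_iff)

lemma tl_tunitr: "well_typed f \<Longrightarrow> tl_equiv K (Tens f (Idn 0)) f"
  using null.tunitr[of f "src f" "tgt f"] by (auto simp: tl_equiv_def typed_iff)

lemma tl_tid: "tl_equiv K (Tens (Idn m) (Idn n)) (Idn (m + n))"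
  using null.tid[of m n] by (auto simp: tl_equiv_def typed_iff)

lemma tl_interchange:
  "well_typed f \<Longrightarrow> well_typed g \<Longrightarrow> well_typed h \<Longrightarrow> well_typed k \<Longrightarrow>
    src g = tgt f \<Longrightarrow> src k = tgt h \<Longrightarrow>
    tl_equiv K (Tens (Comp g f) (Comp k h)) (Comp (Tens g k) (Tens f h))"
  using null.interchange[of f "src f" "tgt f" g "tgt g" h "src h" "tgt h" k "tgt k"]
  by (auto simp: tl_equiv_def typed_iff)

lemma tl_circle: "tl_equiv K (Comp Cap Cup) (Idn 0)"
  using null.circ by (auto simp: tl_equiv_def)

lemma tl_zero_zig1: "tl_zero K (Comp (Tens (Idn 1) Cap) (Tens Cup (Idn 1)))"
  using null.zig1 by (auto simp: tl_zero_def)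

lemma tl_zero_zig2: "tl_zero K (Comp (Tens Cap (Idn 1)) (Tens (Idn 1) Cup))"
  using null.zig2 by (auto simp: tl_zero_def)

lemma tl_zero_equiv:
  assumes "tl_equiv K s t" "tl_zero K t"
  shows "tl_zero K s"
proof -
  have "ind s = (\<lambda>v. diff (ind s) (ind t) v + ind t v :: 'k)" by (auto simp: diff_def)
  then show ?thesis
    using assms null.add[of "src s" "tgt s" "diff (ind s) (ind t) :: tm \<Rightarrow> 'k" "ind t"]
    by (auto simp: tl_equiv_def tl_zero_def)
qed

lemma tl_zero_compL:
  assumes "tl_zero K s" "well_typed g" "src g = tgt s"
  shows "tl_zero K (Comp g s)"
proof -
  have "lcomp g (ind s :: tm \<Rightarrow> 'k) = ind (Comp g s)"
    by (rule ext) (auto simp: lcomp_def ind_def split: tm.splits)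
  then show ?thesis using assms null.lcomp[of "src s" "tgt s" "ind s :: tm \<Rightarrow> 'k" g "tgt g"]
    by (auto simp: tl_zero_def typed_iff)
qed

lemma tl_zero_compR:
  assumes "tl_zero K s" "well_typed f" "tgt f = src s"
  shows "tl_zero K (Comp s f)"
proof -
  have "rcomp (ind s :: tm \<Rightarrow> 'k) f = ind (Comp s f)"
    by (rule ext) (auto simp: rcomp_def ind_def split: tm.splits)
  then show ?thesis using assms null.rcomp[of "src s" "tgt s" "ind s :: tm \<Rightarrow> 'k" f "src f"]
    by (auto simp: tl_zero_def typed_iff)
qed

lemma tl_zero_tensL:
  assumes "tl_zero K s" "well_typed g"
  shows "tl_zero K (Tens g s)"
proof -
  have "ltens g (ind s :: tm \<Rightarrow> 'k) = ind (Tens g s)"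
    by (rule ext) (auto simp: ltens_def ind_def split: tm.splits)
  then show ?thesis
    using assms null.ltens[of "src s" "tgt s" "ind s :: tm \<Rightarrow> 'k" g "src g" "tgt g"]
    by (auto simp: tl_zero_def typed_iff)
qed

lemma tl_zero_tensR:
  assumes "tl_zero K s" "well_typed g"
  shows "tl_zero K (Tens s g)"
proof -
  have "rtens (ind s :: tm \<Rightarrow> 'k) g = ind (Tens s g)"
    by (rule ext) (auto simp: rtens_def ind_def split: tm.splits)
  then show ?thesis
    using assms null.rtens[of "src s" "tgt s" "ind s :: tm \<Rightarrow> 'k" g "src g" "tgt g"]
    by (auto simp: tl_zero_def typed_iff)
qed

lemma tl_eq_sem:
  assumes "tl_eq K m n s t"
  shows "sem s = sem t"
proof (cases "s = t")
  case False
  let ?x = "diff (ind s) (ind t) :: tm \<Rightarrow> 'k"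
  have sp: "supp ?x \<subseteq> {s, t}" by (auto simp: supp_def diff_def ind_def)
  have "word_matrix ?x u v = of_bool (sem s u = Some v) - of_bool (sem t u = Some v)" for u v
    using False by (subst word_matrix_superset[OF _ sp]) (auto simp: diff_def ind_def)
  moreover have "word_null m n ?x"
    using assms null_word_null by (auto simp: tl_eq_def)
  ultimately have "sem s u = Some v \<longleftrightarrow> sem t u = Some v" for u v
    by (simp add: word_null_def of_bool_eq_iff)
  then show ?thesis by (metis ext not_None_eq)
qed simp

lemma tl_equiv_sem: "tl_equiv K s t \<Longrightarrow> sem s = sem t"
  by (auto simp: tl_equiv_def tl_eq_def intro: tl_eq_sem)

section \<open>Layers: a single generator between identity strands\<close>

fun tens_list :: "tm list \<Rightarrow> tm" where
  "tens_list [] = Idn 0"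
| "tens_list (x # xs) = Tens x (tens_list xs)"

lemma tens_list_simps [simp]:
  "src (tens_list xs) = sum_list (map src xs)"
  "tgt (tens_list xs) = sum_list (map tgt xs)"
  "well_typed (tens_list xs) \<longleftrightarrow> (\<forall>x\<in>set xs. well_typed x)"
  by (induction xs) auto

definition pad :: "tm \<Rightarrow> nat \<Rightarrow> nat \<Rightarrow> tm" where
  "pad g p q = tens_list [Idn p, g, Idn q]"

lemma pad_simps [simp]:
  "src (pad g p q) = p + src g + q"
  "tgt (pad g p q) = p + tgt g + q"
  "well_typed (pad g p q) \<longleftrightarrow> well_typed g"
  by (auto simp: pad_def)

lemma tens_list_single: "well_typed x \<Longrightarrow> tl_equiv K (tens_list [x]) x"
  by (simp add: tl_tunitr)

lemma tens_list_append:
  "\<forall>x\<in>set xs. well_typed x \<Longrightarrow> \<forall>y\<in>set ys. well_typed y \<Longrightarrow>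
    tl_equiv K (Tens (tens_list xs) (tens_list ys)) (tens_list (xs @ ys))"
proof (induction xs)
  case Nil
  then show ?case by (simp add: tl_tunitl)
next
  case (Cons x xs)
  have "tl_equiv K (Tens (tens_list (x # xs)) (tens_list ys))
      (Tens x (Tens (tens_list xs) (tens_list ys)))"
    using Cons.prems by (simp add: tl_tassoc)
  also have "tl_equiv K \<dots> (Tens x (tens_list (xs @ ys)))"
    using Cons by (intro tl_equiv_tensL) auto
  finally show ?case by simp
qed

lemma tens_list_prefix:
  "tl_equiv K (tens_list A) (tens_list B) \<Longrightarrow> \<forall>x\<in>set xs. well_typed x \<Longrightarrow>
    tl_equiv K (tens_list (xs @ A)) (tens_list (xs @ B))"
  by (induction xs) (auto intro: tl_equiv_tensL)

lemma tens_list_pointwise: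
  "list_all2 (tl_equiv K) xs ys \<Longrightarrow> tl_equiv K (tens_list xs) (tens_list ys)"
  by (induction rule: list_all2_induct) (auto intro: tl_equiv_tens tl_equiv_refl)

lemma tens_list_comp:
  assumes "list_all2 (\<lambda>x y. well_typed x \<and> well_typed y \<and> src x = tgt y) xs ys"
    and "zs = map2 Comp xs ys"
  shows "tl_equiv K (Comp (tens_list xs) (tens_list ys)) (tens_list zs)"
  using assms(1) unfolding assms(2)
proof (induction rule: list_all2_induct)
  case Nil
  then show ?case by (simp add: tl_idn_idn)
next
  case (Cons x xs y ys)
  have "\<forall>x\<in>set xs. well_typed x" "\<forall>y\<in>set ys. well_typed y"
    "sum_list (map src xs) = sum_list (map tgt ys)"
    using Cons.hyps(2) by (induction rule: list_all2_induct) auto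
  then have "tl_equiv K (Comp (tens_list (x # xs)) (tens_list (y # ys)))
      (Tens (Comp x y) (Comp (tens_list xs) (tens_list ys)))"
    using Cons by (simp add: tl_equiv_sym tl_interchange)
  also have "tl_equiv K \<dots> (Tens (Comp x y) (tens_list (map2 Comp xs ys)))"
    using Cons by (intro tl_equiv_tensL) auto
  finally show ?case by simp
qed

lemma tens_list_merge:
  assumes "\<forall>y\<in>set ys. well_typed y"
  shows "tl_equiv K (tens_list (Idn m # Idn n # ys)) (tens_list (Idn (m + n) # ys))"
proof -
  have "tl_equiv K (tens_list (Idn m # Idn n # ys)) (Tens (Tens (Idn m) (Idn n)) (tens_list ys))"
    using assms by (simp add: tl_equiv_sym tl_tassoc)
  also have "tl_equiv K \<dots> (tens_list (Idn (m + n) # ys))"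
    using assms by (simp add: tl_equiv_tensR tl_tid)
  finally show ?thesis .
qed

lemma tens_list_group:
  "well_typed x \<Longrightarrow> well_typed y \<Longrightarrow> \<forall>z\<in>set ys. well_typed z \<Longrightarrow>
    tl_equiv K (tens_list (x # y # ys)) (tens_list (Tens x y # ys))"
  by (simp add: tl_equiv_sym tl_tassoc)

lemma tens_list_idn3: "tl_equiv K (tens_list [Idn a, Idn b, Idn c]) (Idn (a + b + c))"
proof -
  have "tl_equiv K (tens_list [Idn a, Idn b, Idn c]) (tens_list [Idn (a + b), Idn c])"
    by (rule tens_list_merge) simp
  also have "tl_equiv K \<dots> (tens_list [Idn (a + b + c)])" by (rule tens_list_merge) simp
  also have "tl_equiv K \<dots> (Idn (a + b + c))" by (rule tens_list_single) simp
  finally show ?thesis .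
qed

lemma pad_cong: "tl_equiv K g h \<Longrightarrow> tl_equiv K (pad g p q) (pad h p q)"
  unfolding pad_def by (intro tens_list_pointwise) (auto intro: tl_equiv_refl dest: tl_equiv_typing)

lemma pad_Idn: "tl_equiv K (pad (Idn n) p q) (Idn (p + n + q))"
  unfolding pad_def by (rule tens_list_idn3)

lemma pad_0_0:
  assumes "well_typed g"
  shows "tl_equiv K (pad g 0 0) g"
proof -
  have "tl_equiv K (pad g 0 0) (tens_list [g, Idn 0])"
    unfolding pad_def using assms by (simp add: tl_tunitl)
  also have "tl_equiv K \<dots> (tens_list [g])" using assms by (simp add: tl_equiv_tensL tl_tunitr)
  also have "tl_equiv K \<dots> g" using assms by (rule tens_list_single)
  finally show ?thesis .
qed

lemma pad_comp:
  assumes "well_typed g" "well_typed h" "src g = tgt h"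
  shows "tl_equiv K (Comp (pad g p q) (pad h p q)) (pad (Comp g h) p q)"
proof -
  have "tl_equiv K (Comp (pad g p q) (pad h p q))
      (tens_list [Comp (Idn p) (Idn p), Comp g h, Comp (Idn q) (Idn q)])"
    unfolding pad_def using assms by (intro tens_list_comp) auto
  also have "tl_equiv K \<dots> (pad (Comp g h) p q)"
    unfolding pad_def using assms
    by (intro tens_list_pointwise) (auto simp: tl_idn_idn tl_equiv_refl)
  finally show ?thesis .
qed

lemma tl_zero_pad:
  assumes "tl_zero K g"
  shows "tl_zero K (pad g p q)"
proof -
  have "well_typed g" using assms by (simp add: tl_zero_def)
  then show ?thesis
    unfolding pad_def using tl_zero_tensL[OF tl_zero_tensR[OF assms]] by simp
qed

lemma pad_Suc_left:
  assumes "well_typed g"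
  shows "tl_equiv K (pad g (p + 1) q) (pad (Tens (Idn 1) g) p q)"
proof -
  have "tl_equiv K (pad g (p + 1) q) (tens_list [Idn p, Idn 1, g, Idn q])"
    unfolding pad_def using assms by (intro tl_equiv_sym[OF tens_list_merge]) auto
  also have "tl_equiv K \<dots> (tens_list ([Idn p] @ [Tens (Idn 1) g, Idn q]))"
    using tens_list_prefix[OF tens_list_group[of "Idn 1" g "[Idn q]"], of "[Idn p]"] assms by simp
  finally show ?thesis by (simp add: pad_def)
qed

lemma pad_Suc_right:
  assumes "well_typed g"
  shows "tl_equiv K (pad g p (q + 1)) (pad (Tens g (Idn 1)) p q)"
proof -
  have "tl_equiv K (pad g p (q + 1)) (tens_list ([Idn p, g] @ [Idn 1, Idn q]))"
    using tens_list_prefix[OF tl_equiv_sym[OF tens_list_merge[of "[]" 1 q]], of "[Idn p, g]"] assms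
    by (simp add: pad_def)
  also have "tl_equiv K \<dots> (tens_list ([Idn p] @ [Tens g (Idn 1), Idn q]))"
    using tens_list_prefix[OF tens_list_group[of g "Idn 1" "[Idn q]"], of "[Idn p]"] assms by simp
  finally show ?thesis by (simp add: pad_def)
qed

lemma pad_circle: "tl_equiv K (Comp (pad Cap p q) (pad Cup p q)) (Idn (p + q))"
proof -
  have "tl_equiv K (Comp (pad Cap p q) (pad Cup p q)) (pad (Comp Cap Cup) p q)"
    by (rule pad_comp) auto
  also have "tl_equiv K \<dots> (pad (Idn 0) p q)" by (rule pad_cong[OF tl_circle])
  also have "tl_equiv K \<dots> (Idn (p + q))" using pad_Idn[of 0 p q] by simp
  finally show ?thesis .
qed

lemma pad_zigzag1: "tl_zero K (Comp (pad Cap (p + 1) q) (pad Cup p (q + 1)))"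
proof -
  have "tl_equiv K (Comp (pad Cap (p + 1) q) (pad Cup p (q + 1)))
      (Comp (pad (Tens (Idn 1) Cap) p q) (pad (Tens Cup (Idn 1)) p q))"
    by (intro tl_equiv_comp pad_Suc_left pad_Suc_right) auto
  also have "tl_equiv K \<dots> (pad (Comp (Tens (Idn 1) Cap) (Tens Cup (Idn 1))) p q)"
    by (rule pad_comp) auto
  finally show ?thesis using tl_zero_equiv tl_zero_pad[OF tl_zero_zig1] by blast
qed

lemma pad_zigzag2: "tl_zero K (Comp (pad Cap p (q + 1)) (pad Cup (p + 1) q))"
proof -
  have "tl_equiv K (Comp (pad Cap p (q + 1)) (pad Cup (p + 1) q))
      (Comp (pad (Tens Cap (Idn 1)) p q) (pad (Tens (Idn 1) Cup) p q))"
    by (intro tl_equiv_comp pad_Suc_left pad_Suc_right) auto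
  also have "tl_equiv K \<dots> (pad (Comp (Tens Cap (Idn 1)) (Tens (Idn 1) Cup)) p q)"
    by (rule pad_comp) auto
  finally show ?thesis using tl_zero_equiv tl_zero_pad[OF tl_zero_zig2] by blast
qed

lemma pad_tens_idn:
  assumes "well_typed g"
  shows "tl_equiv K (Tens (pad g p q) (Idn r)) (pad g p (q + r))"
proof -
  have "tl_equiv K (Tens (pad g p q) (Idn r))
      (Tens (tens_list [Idn p, g, Idn q]) (tens_list [Idn r]))"
    unfolding pad_def using assms by (intro tl_equiv_tensL tl_equiv_sym[OF tens_list_single]) auto
  also have "tl_equiv K \<dots> (tens_list ([Idn p, g] @ [Idn q, Idn r]))"
    using assms tens_list_append[of "[Idn p, g, Idn q]" "[Idn r]"] by simp
  also have "tl_equiv K \<dots> (tens_list ([Idn p, g] @ [Idn (q + r)]))"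
    using assms by (intro tens_list_prefix tens_list_merge) auto
  finally show ?thesis by (simp add: pad_def)
qed

lemma idn_tens_pad:
  assumes "well_typed g"
  shows "tl_equiv K (Tens (Idn r) (pad g p q)) (pad g (r + p) q)"
proof -
  have "tl_equiv K (Tens (Idn r) (pad g p q))
      (Tens (tens_list [Idn r]) (tens_list [Idn p, g, Idn q]))"
    unfolding pad_def using assms by (intro tl_equiv_tensR tl_equiv_sym[OF tens_list_single]) auto
  also have "tl_equiv K \<dots> (tens_list [Idn r, Idn p, g, Idn q])"
    using assms tens_list_append[of "[Idn r]" "[Idn p, g, Idn q]"] by simp
  also have "tl_equiv K \<dots> (tens_list [Idn (r + p), g, Idn q])"
    using assms by (intro tens_list_merge) auto
  finally show ?thesis by (simp add: pad_def)
qed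

lemma pad_right_split:
  assumes "well_typed g"
  shows "tl_equiv K (pad g p (r + d + s)) (tens_list [Idn p, g, Idn r, Idn d, Idn s])"
proof -
  have "tl_equiv K (tens_list [Idn r, Idn d, Idn s]) (tens_list [Idn (r + d + s)])"
    by (rule tl_equiv_trans[OF tens_list_idn3 tl_equiv_sym[OF tens_list_single]]) simp
  then have "tl_equiv K (tens_list ([Idn p, g] @ [Idn r, Idn d, Idn s]))
      (tens_list ([Idn p, g] @ [Idn (r + d + s)]))"
    using assms by (intro tens_list_prefix) auto
  then show ?thesis by (simp add: pad_def tl_equiv_sym)
qed

lemma pad_left_split:
  assumes "well_typed h"
  shows "tl_equiv K (pad h (p + a + r) s) (tens_list [Idn p, Idn a, Idn r, h, Idn s])"
proof -
  have "tl_equiv K (tens_list [Idn p, Idn a, Idn r, h, Idn s])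
      (tens_list [Idn (p + a), Idn r, h, Idn s])"
    using assms by (intro tens_list_merge) auto
  also have "tl_equiv K \<dots> (tens_list [Idn (p + a + r), h, Idn s])"
    using assms by (intro tens_list_merge) auto
  finally show ?thesis by (simp add: pad_def tl_equiv_sym)
qed

lemma pad_far_comp1:
  assumes "well_typed g" "well_typed h"
  shows "tl_equiv K (Comp (pad g p (r + tgt h + s)) (pad h (p + src g + r) s))
    (tens_list [Idn p, g, Idn r, h, Idn s])"
proof -
  have "tl_equiv K (Comp (pad g p (r + tgt h + s)) (pad h (p + src g + r) s))
      (Comp (tens_list [Idn p, g, Idn r, Idn (tgt h), Idn s])
        (tens_list [Idn p, Idn (src g), Idn r, h, Idn s]))"
    using assms by (intro tl_equiv_comp pad_right_split pad_left_split) auto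
  also have "tl_equiv K \<dots> (tens_list [Comp (Idn p) (Idn p), Comp g (Idn (src g)),
      Comp (Idn r) (Idn r), Comp (Idn (tgt h)) h, Comp (Idn s) (Idn s)])"
    using assms by (intro tens_list_comp) auto
  also have "tl_equiv K \<dots> (tens_list [Idn p, g, Idn r, h, Idn s])"
    using assms by (intro tens_list_pointwise) (auto simp: tl_idn_idn tl_idl tl_idr)
  finally show ?thesis .
qed

lemma pad_far_comp2:
  assumes "well_typed g" "well_typed h"
  shows "tl_equiv K (Comp (pad h (p + tgt g + r) s) (pad g p (r + src h + s)))
    (tens_list [Idn p, g, Idn r, h, Idn s])"
proof -
  have "tl_equiv K (Comp (pad h (p + tgt g + r) s) (pad g p (r + src h + s)))
      (Comp (tens_list [Idn p, Idn (tgt g), Idn r, h, Idn s])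
        (tens_list [Idn p, g, Idn r, Idn (src h), Idn s]))"
    using assms by (intro tl_equiv_comp pad_right_split pad_left_split) auto
  also have "tl_equiv K \<dots> (tens_list [Comp (Idn p) (Idn p), Comp (Idn (tgt g)) g,
      Comp (Idn r) (Idn r), Comp h (Idn (src h)), Comp (Idn s) (Idn s)])"
    using assms by (intro tens_list_comp) auto
  also have "tl_equiv K \<dots> (tens_list [Idn p, g, Idn r, h, Idn s])"
    using assms by (intro tens_list_pointwise) (auto simp: tl_idn_idn tl_idl tl_idr)
  finally show ?thesis .
qed

lemma pad_far_commute:
  "well_typed g \<Longrightarrow> well_typed h \<Longrightarrow>
    tl_equiv K (Comp (pad g p (r + tgt h + s)) (pad h (p + src g + r) s))
      (Comp (pad h (p + tgt g + r) s) (pad g p (r + src h + s)))"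
  by (meson pad_far_comp1 pad_far_comp2 tl_equiv_sym tl_equiv_trans)

lemma tens_factor1:
  assumes "well_typed f" "well_typed g"
  shows "tl_equiv K (Tens f g) (Comp (Tens (Idn (tgt f)) g) (Tens f (Idn (src g))))"
proof -
  have "tl_equiv K (Tens f g) (Tens (Comp (Idn (tgt f)) f) (Comp g (Idn (src g))))"
    using assms by (intro tl_equiv_tens tl_equiv_sym[OF tl_idl] tl_equiv_sym[OF tl_idr])
  also have "tl_equiv K \<dots> (Comp (Tens (Idn (tgt f)) g) (Tens f (Idn (src g))))"
    using assms by (intro tl_interchange) auto
  finally show ?thesis .
qed

lemma tens_factor2:
  assumes "well_typed f" "well_typed g"
  shows "tl_equiv K (Tens f g) (Comp (Tens f (Idn (tgt g))) (Tens (Idn (src f)) g))"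
proof -
  have "tl_equiv K (Tens f g) (Tens (Comp f (Idn (src f))) (Comp (Idn (tgt g)) g))"
    using assms by (intro tl_equiv_tens tl_equiv_sym[OF tl_idl] tl_equiv_sym[OF tl_idr])
  also have "tl_equiv K \<dots> (Comp (Tens f (Idn (tgt g))) (Tens (Idn (src f)) g))"
    using assms by (intro tl_interchange) auto
  finally show ?thesis .
qed

section \<open>Cup diagrams and cap diagrams in standard form\<close>

text \<open>\<open>cups n cs\<close> stacks cups on top of \<open>n\<close> strands: the last element of \<open>cs\<close> is the
  lowest cup, and a cup at position \<open>i\<close> is inserted after the first \<open>i\<close> strands.  Dually,
  \<open>caps n ds\<close> has its first cap at the bottom.\<close>

fun cups :: "nat \<Rightarrow> nat list \<Rightarrow> tm" where
  "cups n [] = Idn n"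
| "cups n (i # cs) = Comp (pad Cup i (n + 2 * length cs - i)) (cups n cs)"

fun caps :: "nat \<Rightarrow> nat list \<Rightarrow> tm" where
  "caps n [] = Idn n"
| "caps n (i # ds) = Comp (caps n ds) (pad Cap i (n + 2 * length ds - i))"

fun admissible :: "nat \<Rightarrow> nat list \<Rightarrow> bool" where
  "admissible n [] = True"
| "admissible n (i # cs) \<longleftrightarrow> i \<le> n + 2 * length cs \<and> admissible n cs"

lemma cups_typing:
  "admissible n cs \<Longrightarrow>
    well_typed (cups n cs) \<and> src (cups n cs) = n \<and> tgt (cups n cs) = n + 2 * length cs"
  by (induction cs) auto

lemma caps_typing:
  "admissible n ds \<Longrightarrow>
    well_typed (caps n ds) \<and> tgt (caps n ds) = n \<and> src (caps n ds) = n + 2 * length ds"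
  by (induction ds) auto

lemma no_cap_cups: "no_cap (cups n cs)"
  by (induction cs) (auto simp: pad_def)

lemma no_cup_caps: "no_cup (caps n ds)"
  by (induction ds) (auto simp: pad_def)

lemma admissible_append:
  "admissible n (cs1 @ cs2) \<longleftrightarrow> admissible (n + 2 * length cs2) cs1 \<and> admissible n cs2"
  by (induction cs1) (auto simp: algebra_simps)

lemma admissible_widen: "admissible n cs \<Longrightarrow> admissible (n + p) cs"
  by (induction cs) auto

lemma admissible_shift: "admissible n cs \<Longrightarrow> admissible (p + n) (map ((+) p) cs)"
  by (induction cs) auto

lemma cups_commute:
  assumes "j + 2 \<le> i" "i \<le> w + 2"
  shows "tl_equiv K (Comp (pad Cup i (w + 2 - i)) (pad Cup j (w - j)))
    (Comp (pad Cup j (w + 2 - j)) (pad Cup (i - 2) (w + 2 - i)))"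
proof -
  obtain r s where "i = j + 2 + r" "w = j + r + s"
    using assms by (intro that[of "i - j - 2" "w + 2 - i"]) auto
  then show ?thesis using pad_far_commute[of Cup Cup j r s]
    by (simp add: tl_equiv_sym algebra_simps)
qed

lemma caps_commute:
  assumes "j + 2 \<le> i" "i \<le> w + 2"
  shows "tl_equiv K (Comp (pad Cap j (w - j)) (pad Cap i (w + 2 - i)))
    (Comp (pad Cap (i - 2) (w + 2 - i)) (pad Cap j (w + 2 - j)))"
proof -
  obtain r s where "i = j + 2 + r" "w = j + r + s"
    using assms by (intro that[of "i - j - 2" "w + 2 - i"]) auto
  then show ?thesis using pad_far_commute[of Cap Cap j r s]
    by (simp add: algebra_simps)
qed

lemma cap_left_of_cup_commute:
  assumes "i + 2 \<le> j" "j \<le> w"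
  shows "tl_equiv K (Comp (pad Cap i (w - i)) (pad Cup j (w - j)))
    (Comp (pad Cup (j - 2) (w - j)) (pad Cap i (w - 2 - i)))"
proof -
  obtain r s where "j = i + 2 + r" "w = i + 2 + r + s"
    using assms by (intro that[of "j - i - 2" "w - j"]) auto
  then show ?thesis using pad_far_commute[of Cap Cup i r s]
    by (simp add: algebra_simps)
qed

lemma cap_right_of_cup_commute:
  assumes "j + 2 \<le> i" "i \<le> w"
  shows "tl_equiv K (Comp (pad Cap i (w - i)) (pad Cup j (w - j)))
    (Comp (pad Cup j (w - 2 - j)) (pad Cap (i - 2) (w - i)))"
proof -
  obtain r s where "i = j + 2 + r" "w = j + 2 + r + s"
    using assms by (intro that[of "i - j - 2" "w - i"]) auto
  then show ?thesis using pad_far_commute[of Cup Cap j r s]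
    by (simp add: tl_equiv_sym algebra_simps)
qed

lemma cups_append:
  "admissible (n + 2 * length cs2) cs1 \<Longrightarrow> admissible n cs2 \<Longrightarrow>
    tl_equiv K (Comp (cups (n + 2 * length cs2) cs1) (cups n cs2)) (cups n (cs1 @ cs2))"
proof (induction cs1)
  case Nil
  then show ?case using tl_idl[of "cups n cs2"] cups_typing[of n cs2] by simp
next
  case (Cons i cs1)
  let ?m = "n + 2 * length cs2"
  let ?U = "pad Cup i (?m + 2 * length cs1 - i)"
  have adm: "admissible ?m cs1" "i \<le> ?m + 2 * length cs1" using Cons by auto
  have "tl_equiv K (Comp (cups ?m (i # cs1)) (cups n cs2))
      (Comp ?U (Comp (cups ?m cs1) (cups n cs2)))"
    using cups_typing[OF adm(1)] cups_typing[OF Cons.prems(2)] adm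
    by (simp add: tl_equiv_sym tl_assoc)
  also have "tl_equiv K \<dots> (Comp ?U (cups n (cs1 @ cs2)))"
    using Cons adm cups_typing[OF adm(1)] by (intro tl_equiv_compL) auto
  finally show ?case by (simp add: algebra_simps)
qed

lemma caps_append:
  "admissible (n + 2 * length ds1) ds2 \<Longrightarrow> admissible n ds1 \<Longrightarrow>
    tl_equiv K (Comp (caps n ds1) (caps (n + 2 * length ds1) ds2)) (caps n (ds2 @ ds1))"
proof (induction ds2)
  case Nil
  then show ?case using tl_idr[of "caps n ds1"] caps_typing[of n ds1] by simp
next
  case (Cons i ds2)
  let ?m = "n + 2 * length ds1"
  let ?D = "pad Cap i (?m + 2 * length ds2 - i)"
  have adm: "admissible ?m ds2" "i \<le> ?m + 2 * length ds2" using Cons by auto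
  have "tl_equiv K (Comp (caps n ds1) (caps ?m (i # ds2)))
      (Comp (Comp (caps n ds1) (caps ?m ds2)) ?D)"
    using caps_typing[OF adm(1)] caps_typing[OF Cons.prems(2)] adm by (simp add: tl_assoc)
  also have "tl_equiv K \<dots> (Comp (caps n (ds2 @ ds1)) ?D)"
    using Cons adm caps_typing[OF adm(1)] by (intro tl_equiv_compR) auto
  finally show ?case by (simp add: algebra_simps)
qed

lemma cups_tens_idn:
  "admissible n cs \<Longrightarrow> tl_equiv K (Tens (cups n cs) (Idn p)) (cups (n + p) cs)"
proof (induction cs)
  case Nil
  then show ?case by (simp add: tl_tid)
next
  case (Cons i cs)
  let ?U = "pad Cup i (n + 2 * length cs - i)"
  have adm: "admissible n cs" "i \<le> n + 2 * length cs" using Cons by auto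
  note typing = cups_typing[OF adm(1)]
  have "tl_equiv K (Tens (cups n (i # cs)) (Idn p))
      (Tens (Comp ?U (cups n cs)) (Comp (Idn p) (Idn p)))"
    using typing adm unfolding cups.simps caps.simps
    by (intro tl_equiv_tensL tl_equiv_sym[OF tl_idn_idn]) auto
  also have "tl_equiv K \<dots> (Comp (Tens ?U (Idn p)) (Tens (cups n cs) (Idn p)))"
    using typing adm by (intro tl_interchange) auto
  also have "tl_equiv K \<dots> (Comp (pad Cup i (n + p + 2 * length cs - i)) (cups (n + p) cs))"
  proof -
    have "n + 2 * length cs - i + p = n + p + 2 * length cs - i" using adm by simp
    then show ?thesis
      using typing adm Cons pad_tens_idn[of Cup i "n + 2 * length cs - i" p]
      by (intro tl_equiv_comp) auto
  qed
  finally show ?case using adm by simp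
qed

lemma idn_tens_cups:
  "admissible n cs \<Longrightarrow> tl_equiv K (Tens (Idn p) (cups n cs)) (cups (p + n) (map ((+) p) cs))"
proof (induction cs)
  case Nil
  then show ?case by (simp add: tl_tid)
next
  case (Cons i cs)
  let ?U = "pad Cup i (n + 2 * length cs - i)"
  have adm: "admissible n cs" "i \<le> n + 2 * length cs" using Cons by auto
  note typing = cups_typing[OF adm(1)]
  have "tl_equiv K (Tens (Idn p) (cups n (i # cs)))
      (Tens (Comp (Idn p) (Idn p)) (Comp ?U (cups n cs)))"
    using typing adm unfolding cups.simps caps.simps
    by (intro tl_equiv_tensR tl_equiv_sym[OF tl_idn_idn]) auto
  also have "tl_equiv K \<dots> (Comp (Tens (Idn p) ?U) (Tens (Idn p) (cups n cs)))"
    using typing adm by (intro tl_interchange) auto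
  also have "tl_equiv K \<dots>
      (Comp (pad Cup (p + i) (n + 2 * length cs - i)) (cups (p + n) (map ((+) p) cs)))"
    using typing adm Cons by (intro tl_equiv_comp idn_tens_pad) auto
  finally show ?case using adm by simp
qed

lemma caps_tens_idn:
  "admissible n ds \<Longrightarrow> tl_equiv K (Tens (caps n ds) (Idn p)) (caps (n + p) ds)"
proof (induction ds)
  case Nil
  then show ?case by (simp add: tl_tid)
next
  case (Cons i ds)
  let ?D = "pad Cap i (n + 2 * length ds - i)"
  have adm: "admissible n ds" "i \<le> n + 2 * length ds" using Cons by auto
  note typing = caps_typing[OF adm(1)]
  have "tl_equiv K (Tens (caps n (i # ds)) (Idn p))
      (Tens (Comp (caps n ds) ?D) (Comp (Idn p) (Idn p)))"
    using typing adm unfolding cups.simps caps.simps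
    by (intro tl_equiv_tensL tl_equiv_sym[OF tl_idn_idn]) auto
  also have "tl_equiv K \<dots> (Comp (Tens (caps n ds) (Idn p)) (Tens ?D (Idn p)))"
    using typing adm by (intro tl_interchange) auto
  also have "tl_equiv K \<dots> (Comp (caps (n + p) ds) (pad Cap i (n + p + 2 * length ds - i)))"
  proof -
    have "n + 2 * length ds - i + p = n + p + 2 * length ds - i" using adm by simp
    then show ?thesis
      using typing adm Cons pad_tens_idn[of Cap i "n + 2 * length ds - i" p]
      by (intro tl_equiv_comp) auto
  qed
  finally show ?case using adm by simp
qed

lemma idn_tens_caps:
  "admissible n ds \<Longrightarrow> tl_equiv K (Tens (Idn p) (caps n ds)) (caps (p + n) (map ((+) p) ds))"
proof (induction ds)
  case Nil
  then show ?case by (simp add: tl_tid)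
next
  case (Cons i ds)
  let ?D = "pad Cap i (n + 2 * length ds - i)"
  have adm: "admissible n ds" "i \<le> n + 2 * length ds" using Cons by auto
  note typing = caps_typing[OF adm(1)]
  have "tl_equiv K (Tens (Idn p) (caps n (i # ds)))
      (Tens (Comp (Idn p) (Idn p)) (Comp (caps n ds) ?D))"
    using typing adm unfolding cups.simps caps.simps
    by (intro tl_equiv_tensR tl_equiv_sym[OF tl_idn_idn]) auto
  also have "tl_equiv K \<dots> (Comp (Tens (Idn p) (caps n ds)) (Tens (Idn p) ?D))"
    using typing adm by (intro tl_interchange) auto
  also have "tl_equiv K \<dots>
      (Comp (caps (p + n) (map ((+) p) ds)) (pad Cap (p + i) (n + 2 * length ds - i)))"
    using typing adm Cons by (intro tl_equiv_comp idn_tens_pad) auto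
  finally show ?case using adm by simp
qed

lemma cups_tens:
  assumes adm: "admissible k1 cs1" "admissible k2 cs2"
  defines "cs \<equiv> map ((+) (k1 + 2 * length cs1)) cs2 @ cs1"
  shows "tl_equiv K (Tens (cups k1 cs1) (cups k2 cs2)) (cups (k1 + k2) cs)"
proof -
  let ?cs2 = "map ((+) (k1 + 2 * length cs1)) cs2"
  note typing = cups_typing[OF adm(1)] cups_typing[OF adm(2)]
  have "tl_equiv K (Tens (cups k1 cs1) (cups k2 cs2))
      (Comp (Tens (Idn (k1 + 2 * length cs1)) (cups k2 cs2)) (Tens (cups k1 cs1) (Idn k2)))"
    using tens_factor1[of "cups k1 cs1" "cups k2 cs2"] typing by simp
  also have "tl_equiv K \<dots> (Comp (cups (k1 + k2 + 2 * length cs1) ?cs2) (cups (k1 + k2) cs1))"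
    using typing idn_tens_cups[OF adm(2), of "k1 + 2 * length cs1"] cups_tens_idn[OF adm(1), of k2]
    by (intro tl_equiv_comp) (auto simp: algebra_simps)
  also have "tl_equiv K \<dots> (cups (k1 + k2) cs)"
    using cups_append[of "k1 + k2" cs1 ?cs2] admissible_shift[OF adm(2), of "k1 + 2 * length cs1"]
      admissible_widen[OF adm(1), of k2]
    by (simp add: cs_def algebra_simps)
  finally show ?thesis .
qed

lemma caps_tens:
  assumes adm: "admissible k1 ds1" "admissible k2 ds2"
  defines "ds \<equiv> map ((+) (k1 + 2 * length ds1)) ds2 @ ds1"
  shows "tl_equiv K (Tens (caps k1 ds1) (caps k2 ds2)) (caps (k1 + k2) ds)"
proof -
  let ?ds2 = "map ((+) (k1 + 2 * length ds1)) ds2"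
  note typing = caps_typing[OF adm(1)] caps_typing[OF adm(2)]
  have "tl_equiv K (Tens (caps k1 ds1) (caps k2 ds2))
      (Comp (Tens (caps k1 ds1) (Idn k2)) (Tens (Idn (k1 + 2 * length ds1)) (caps k2 ds2)))"
    using tens_factor2[of "caps k1 ds1" "caps k2 ds2"] typing by simp
  also have "tl_equiv K \<dots> (Comp (caps (k1 + k2) ds1) (caps (k1 + k2 + 2 * length ds1) ?ds2))"
    using typing idn_tens_caps[OF adm(2), of "k1 + 2 * length ds1"] caps_tens_idn[OF adm(1), of k2]
    by (intro tl_equiv_comp) (auto simp: algebra_simps)
  also have "tl_equiv K \<dots> (caps (k1 + k2) ds)"
    using caps_append[of "k1 + k2" ds1 ?ds2] admissible_shift[OF adm(2), of "k1 + 2 * length ds1"]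
      admissible_widen[OF adm(1), of k2]
    by (simp add: ds_def algebra_simps)
  finally show ?thesis .
qed

lemma no_cap_equiv_cups:
  "well_typed t \<Longrightarrow> no_cap t \<Longrightarrow>
    \<exists>cs. admissible (src t) cs \<and> tgt t = src t + 2 * length cs \<and> tl_equiv K t (cups (src t) cs)"
proof (induction t)
  case Cup
  have "tl_equiv K (cups 0 [0]) (pad Cup 0 0)" using tl_idr[of "pad Cup 0 0"] by simp
  also have "tl_equiv K \<dots> Cup" by (rule pad_0_0) simp
  finally show ?case by (intro exI[of _ "[0]"]) (auto intro: tl_equiv_sym)
next
  case (Idn n)
  then show ?case by (intro exI[of _ "[]"]) (auto intro: tl_equiv_refl)
next
  case (Comp g f)
  then have w: "well_typed g" "well_typed f" "src g = tgt f" "no_cap g" "no_cap f" by auto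
  obtain cs1 where f: "admissible (src f) cs1" "tgt f = src f + 2 * length cs1"
    "tl_equiv K f (cups (src f) cs1)"
    using Comp.IH(2) w by blast
  obtain cs2 where g: "admissible (src g) cs2" "tgt g = src g + 2 * length cs2"
    "tl_equiv K g (cups (src g) cs2)"
    using Comp.IH(1) w by blast
  have "tl_equiv K (Comp g f) (Comp (cups (src f + 2 * length cs1) cs2) (cups (src f) cs1))"
    using f g w by (intro tl_equiv_comp) auto
  also have "tl_equiv K \<dots> (cups (src f) (cs2 @ cs1))"
    using f g w by (intro cups_append) auto
  finally show ?case using f g w by (intro exI[of _ "cs2 @ cs1"]) (auto simp: admissible_append)
next
  case (Tens f g)
  then have w: "well_typed g" "well_typed f" "no_cap g" "no_cap f" by auto
  obtain cs1 where f: "admissible (src f) cs1" "tgt f = src f + 2 * length cs1"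
    "tl_equiv K f (cups (src f) cs1)"
    using Tens.IH(1) w by blast
  obtain cs2 where g: "admissible (src g) cs2" "tgt g = src g + 2 * length cs2"
    "tl_equiv K g (cups (src g) cs2)"
    using Tens.IH(2) w by blast
  let ?cs = "map ((+) (src f + 2 * length cs1)) cs2 @ cs1"
  have "tl_equiv K (Tens f g) (Tens (cups (src f) cs1) (cups (src g) cs2))"
    using f g by (intro tl_equiv_tens) auto
  also have "tl_equiv K \<dots> (cups (src f + src g) ?cs)"
    using f g by (intro cups_tens)
  finally show ?case using f g w admissible_shift[OF g(1), of "src f + 2 * length cs1"]
    by (intro exI[of _ ?cs]) (auto simp: admissible_append admissible_widen ac_simps)
qed simp

lemma no_cup_equiv_caps:
  "well_typed t \<Longrightarrow> no_cup t \<Longrightarrow>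
    \<exists>ds. admissible (tgt t) ds \<and> src t = tgt t + 2 * length ds \<and> tl_equiv K t (caps (tgt t) ds)"
proof (induction t)
  case Cap
  have "tl_equiv K (caps 0 [0]) (pad Cap 0 0)" using tl_idl[of "pad Cap 0 0"] by simp
  also have "tl_equiv K \<dots> Cap" by (rule pad_0_0) simp
  finally show ?case by (intro exI[of _ "[0]"]) (auto intro: tl_equiv_sym)
next
  case (Idn n)
  then show ?case by (intro exI[of _ "[]"]) (auto intro: tl_equiv_refl)
next
  case (Comp g f)
  then have w: "well_typed g" "well_typed f" "src g = tgt f" "no_cup g" "no_cup f" by auto
  obtain ds1 where f: "admissible (tgt f) ds1" "src f = tgt f + 2 * length ds1"
    "tl_equiv K f (caps (tgt f) ds1)"
    using Comp.IH(2) w by blast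
  obtain ds2 where g: "admissible (tgt g) ds2" "src g = tgt g + 2 * length ds2"
    "tl_equiv K g (caps (tgt g) ds2)"
    using Comp.IH(1) w by blast
  have "tl_equiv K (Comp g f) (Comp (caps (tgt g) ds2) (caps (tgt g + 2 * length ds2) ds1))"
    using f g w by (intro tl_equiv_comp) auto
  also have "tl_equiv K \<dots> (caps (tgt g) (ds1 @ ds2))"
    using f g w by (intro caps_append) auto
  finally show ?case using f g w by (intro exI[of _ "ds1 @ ds2"]) (auto simp: admissible_append)
next
  case (Tens f g)
  then have w: "well_typed g" "well_typed f" "no_cup g" "no_cup f" by auto
  obtain ds1 where f: "admissible (tgt f) ds1" "src f = tgt f + 2 * length ds1"
    "tl_equiv K f (caps (tgt f) ds1)"
    using Tens.IH(1) w by blast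
  obtain ds2 where g: "admissible (tgt g) ds2" "src g = tgt g + 2 * length ds2"
    "tl_equiv K g (caps (tgt g) ds2)"
    using Tens.IH(2) w by blast
  let ?ds = "map ((+) (tgt f + 2 * length ds1)) ds2 @ ds1"
  have "tl_equiv K (Tens f g) (Tens (caps (tgt f) ds1) (caps (tgt g) ds2))"
    using f g by (intro tl_equiv_tens) auto
  also have "tl_equiv K \<dots> (caps (tgt f + tgt g) ?ds)"
    using f g by (intro caps_tens)
  finally show ?case using f g w admissible_shift[OF g(1), of "tgt f + 2 * length ds1"]
    by (intro exI[of _ ?ds]) (auto simp: admissible_append admissible_widen ac_simps)
qed simp

section \<open>Every nonzero term is a cup diagram after a cap diagram\<close>

lemma pad_cap_cup_cases:
  assumes "i \<le> n" "j \<le> n"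
  obtains (cancel) "tl_equiv K (Comp (pad Cap i (n - i)) (pad Cup j (n - j))) (Idn n)"
  | (zigzag) "tl_zero K (Comp (pad Cap i (n - i)) (pad Cup j (n - j)))"
  | (commute) i' j' n' where "n = n' + 2" "i' \<le> n'" "j' \<le> n'"
      "tl_equiv K (Comp (pad Cap i (n - i)) (pad Cup j (n - j)))
         (Comp (pad Cup j' (n' - j')) (pad Cap i' (n' - i')))"
proof -
  consider "i = j" | "i = j + 1" | "j = i + 1" | "i + 2 \<le> j" | "j + 2 \<le> i"
    by linarith
  then show ?thesis
  proof cases
    case 1
    then show ?thesis using cancel pad_circle[of i "n - i"] assms by simp
  next
    case 2
    then show ?thesis using zigzag pad_zigzag1[of j "n - i"] assms by (simp add: Suc_diff_Suc)
  next
    case 3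
    then show ?thesis using zigzag pad_zigzag2[of i "n - j"] assms by (simp add: Suc_diff_Suc)
  next
    case 4
    then have "n - j = (n - 2) - (j - 2)" by simp
    then show ?thesis
      using commute[of "n - 2" i "j - 2"] cap_left_of_cup_commute[of i j n] 4 assms by simp
  next
    case 5
    then have "n - i = (n - 2) - (i - 2)" by simp
    then show ?thesis
      using commute[of "n - 2" "i - 2" j] cap_right_of_cup_commute[of j i n] 5 assms by simp
  qed
qed

definition cup_cap_form :: "tm \<Rightarrow> bool" where
  "cup_cap_form t \<longleftrightarrow>
    (\<exists>k cs ds. admissible k cs \<and> admissible k ds \<and> tl_equiv K t (Comp (cups k cs) (caps k ds)))"

lemma cup_cap_formI:
  "admissible k cs \<Longrightarrow> admissible k ds \<Longrightarrow> tl_equiv K t (Comp (cups k cs) (caps k ds))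
    \<Longrightarrow> cup_cap_form t"
  unfolding cup_cap_form_def by blast

lemma cup_cap_form_equiv: "tl_equiv K s t \<Longrightarrow> cup_cap_form t \<Longrightarrow> cup_cap_form s"
  unfolding cup_cap_form_def using tl_equiv_trans by blast

lemma cup_cap_form_no_cap:
  assumes "well_typed t" "no_cap t"
  shows "cup_cap_form t"
proof -
  obtain cs where cs: "admissible (src t) cs" "tl_equiv K t (cups (src t) cs)"
    using no_cap_equiv_cups[OF assms] by blast
  have "tl_equiv K t (Comp (cups (src t) cs) (caps (src t) []))"
    using tl_equiv_trans[OF cs(2) tl_equiv_sym[OF tl_idr]] cups_typing[OF cs(1)] by simp
  then show ?thesis using cs(1) by (intro cup_cap_formI[of _ cs "[]"]) auto
qed

lemma cup_cap_form_no_cup: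
  assumes "well_typed t" "no_cup t"
  shows "cup_cap_form t"
proof -
  obtain ds where ds: "admissible (tgt t) ds" "tl_equiv K t (caps (tgt t) ds)"
    using no_cup_equiv_caps[OF assms] by blast
  have "tl_equiv K t (Comp (cups (tgt t) []) (caps (tgt t) ds))"
    using tl_equiv_trans[OF ds(2) tl_equiv_sym[OF tl_idl]] caps_typing[OF ds(1)] by simp
  then show ?thesis using ds(1) by (intro cup_cap_formI[of _ "[]" ds]) auto
qed

lemma cup_cap_form_cup:
  assumes t: "cup_cap_form t" "tgt t = n" and j: "j \<le> n"
  shows "cup_cap_form (Comp (pad Cup j (n - j)) t)"
proof -
  obtain k cs ds where adm: "admissible k cs" "admissible k ds"
    and t_eq: "tl_equiv K t (Comp (cups k cs) (caps k ds))"
    using t(1) unfolding cup_cap_form_def by blast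
  note typing = cups_typing[OF adm(1)] caps_typing[OF adm(2)]
  have n: "n = k + 2 * length cs" using t(2) tl_equiv_typing[OF t_eq] typing by simp
  have "tl_equiv K (Comp (pad Cup j (n - j)) t)
      (Comp (pad Cup j (n - j)) (Comp (cups k cs) (caps k ds)))"
    using t_eq t(2) j by (intro tl_equiv_compL) auto
  also have "tl_equiv K \<dots> (Comp (cups k (j # cs)) (caps k ds))"
    using typing n j by (simp add: tl_assoc)
  finally show ?thesis using adm j n by (intro cup_cap_formI[of k "j # cs" ds]) auto
qed

abbreviation zero_or_cup_cap_form :: "tm \<Rightarrow> bool" where
  "zero_or_cup_cap_form t \<equiv> tl_zero K t \<or> cup_cap_form t"

lemma zero_or_cup_cap_form_equiv:
  "tl_equiv K s t \<Longrightarrow> zero_or_cup_cap_form t \<Longrightarrow> zero_or_cup_cap_form s"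
  using tl_zero_equiv cup_cap_form_equiv by blast

lemma zero_or_cup_cap_form_cup:
  assumes "zero_or_cup_cap_form t" "well_typed t" "tgt t = n" "j \<le> n"
  shows "zero_or_cup_cap_form (Comp (pad Cup j (n - j)) t)"
  using assms cup_cap_form_cup tl_zero_compL[where s = t and g = "pad Cup j (n - j)"] by auto

lemma cap_comp_cups_caps:
  "admissible k cs \<Longrightarrow> admissible k ds \<Longrightarrow> k + 2 * length cs = n + 2 \<Longrightarrow> i \<le> n \<Longrightarrow>
    zero_or_cup_cap_form (Comp (pad Cap i (n - i)) (Comp (cups k cs) (caps k ds)))"
proof (induction cs arbitrary: n i)
  case Nil
  then show ?case
    using caps_typing[OF Nil(2)] no_cup_caps[of k ds]
    by (intro disjI2 cup_cap_form_no_cup) (auto simp: pad_def)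
next
  case (Cons j cs)
  let ?D = "pad Cap i (n - i)" and ?U = "pad Cup j (n - j)"
  let ?X = "Comp (cups k cs) (caps k ds)"
  have adm: "admissible k cs" "j \<le> n" "k + 2 * length cs = n" using Cons.prems by auto
  note typing = cups_typing[OF adm(1)] caps_typing[OF Cons.prems(2)]
  have X: "well_typed ?X" "tgt ?X = n" using typing adm by auto
  have DU_X: "tl_equiv K (Comp ?D (Comp (cups k (j # cs)) (caps k ds))) (Comp (Comp ?D ?U) ?X)"
    using tl_reassoc[of ?D ?U "cups k cs" "caps k ds"] typing adm Cons.prems(4) by simp
  show ?case
  proof (cases rule: pad_cap_cup_cases[OF Cons.prems(4) adm(2), case_names cancel zigzag commute])
    case cancel
    have "tl_equiv K (Comp (Comp ?D ?U) ?X) (Comp (Idn n) ?X)"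
      using cancel X adm(2) Cons.prems(4) by (intro tl_equiv_compR) auto
    also have "tl_equiv K \<dots> ?X" using tl_idl[of ?X] X by simp
    finally show ?thesis
      using DU_X adm Cons.prems(2) tl_equiv_trans by (blast intro: cup_cap_formI)
  next
    case zigzag
    then have "tl_zero K (Comp (Comp ?D ?U) ?X)"
      by (rule tl_zero_compR) (use X adm Cons.prems(4) in auto)
    then show ?thesis using tl_zero_equiv[OF DU_X] by blast
  next
    case (commute i' j' n')
    let ?D' = "pad Cap i' (n' - i')" and ?U' = "pad Cup j' (n' - j')"
    have "tl_equiv K (Comp (Comp ?D ?U) ?X) (Comp (Comp ?U' ?D') ?X)"
      using commute X adm(2) Cons.prems(4) by (intro tl_equiv_compR) auto
    also have "tl_equiv K \<dots> (Comp ?U' (Comp ?D' ?X))"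
      using commute X by (intro tl_equiv_sym[OF tl_assoc]) auto
    finally have
      "tl_equiv K (Comp ?D (Comp (cups k (j # cs)) (caps k ds))) (Comp ?U' (Comp ?D' ?X))"
      using DU_X tl_equiv_trans by blast
    moreover have "zero_or_cup_cap_form (Comp ?D' ?X)"
      using Cons.IH[OF adm(1) Cons.prems(2) _ commute(2)] adm commute by simp
    ultimately show ?thesis
      using zero_or_cup_cap_form_cup[of "Comp ?D' ?X" n' j'] zero_or_cup_cap_form_equiv commute X
      by auto
  qed
qed

lemma zero_or_cup_cap_form_cap:
  assumes t: "zero_or_cup_cap_form t" "well_typed t" "tgt t = n + 2" and i: "i \<le> n"
  shows "zero_or_cup_cap_form (Comp (pad Cap i (n - i)) t)"
  using t(1)
proof
  assume "tl_zero K t"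
  then show ?thesis using t i tl_zero_compL[where s = t and g = "pad Cap i (n - i)"] by auto
next
  assume "cup_cap_form t"
  then obtain k cs ds where adm: "admissible k cs" "admissible k ds"
    and t_eq: "tl_equiv K t (Comp (cups k cs) (caps k ds))"
    unfolding cup_cap_form_def by blast
  have n: "k + 2 * length cs = n + 2"
    using t(3) tl_equiv_typing[OF t_eq] cups_typing[OF adm(1)] by simp
  have "tl_equiv K (Comp (pad Cap i (n - i)) t)
      (Comp (pad Cap i (n - i)) (Comp (cups k cs) (caps k ds)))"
    using t_eq t(3) i by (intro tl_equiv_compL) auto
  then show ?thesis using cap_comp_cups_caps[OF adm n i] zero_or_cup_cap_form_equiv by blast
qed

lemma zero_or_cup_cap_form_comp_cups:
  "admissible n cs \<Longrightarrow> zero_or_cup_cap_form t \<Longrightarrow> well_typed t \<Longrightarrow> tgt t = n \<Longrightarrow>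
    zero_or_cup_cap_form (Comp (cups n cs) t)"
proof (induction cs)
  case Nil
  then show ?case using zero_or_cup_cap_form_equiv[OF tl_idl[of t]] by simp
next
  case (Cons j cs)
  then have adm: "admissible n cs" "j \<le> n + 2 * length cs" by auto
  have "tl_equiv K (Comp (cups n (j # cs)) t)
      (Comp (pad Cup j (n + 2 * length cs - j)) (Comp (cups n cs) t))"
    using Cons.prems cups_typing[OF adm(1)] by (simp add: tl_equiv_sym tl_assoc)
  moreover have
    "zero_or_cup_cap_form (Comp (pad Cup j (n + 2 * length cs - j)) (Comp (cups n cs) t))"
    using Cons adm cups_typing[OF adm(1)] by (intro zero_or_cup_cap_form_cup) auto
  ultimately show ?case by (rule zero_or_cup_cap_form_equiv)
qed

lemma zero_or_cup_cap_form_comp_caps: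
  "admissible n ds \<Longrightarrow> zero_or_cup_cap_form t \<Longrightarrow> well_typed t \<Longrightarrow> tgt t = n + 2 * length ds \<Longrightarrow>
    zero_or_cup_cap_form (Comp (caps n ds) t)"
proof (induction ds arbitrary: t)
  case Nil
  then show ?case using zero_or_cup_cap_form_equiv[OF tl_idl[of t]] by simp
next
  case (Cons i ds)
  let ?D = "pad Cap i (n + 2 * length ds - i)"
  have adm: "admissible n ds" "i \<le> n + 2 * length ds" using Cons.prems by auto
  have "tl_equiv K (Comp (caps n (i # ds)) t) (Comp (caps n ds) (Comp ?D t))"
    using Cons.prems caps_typing[OF adm(1)] by (simp add: tl_equiv_sym tl_assoc)
  moreover have "zero_or_cup_cap_form (Comp ?D t)"
    using Cons.prems adm by (intro zero_or_cup_cap_form_cap) auto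
  then have "zero_or_cup_cap_form (Comp (caps n ds) (Comp ?D t))"
    using Cons.IH[OF adm(1)] Cons.prems adm by simp
  ultimately show ?case by (rule zero_or_cup_cap_form_equiv)
qed

lemma cup_cap_form_comp:
  assumes s: "cup_cap_form s" and t: "zero_or_cup_cap_form t" "well_typed t" "src s = tgt t"
  shows "zero_or_cup_cap_form (Comp s t)"
proof -
  obtain k cs ds where adm: "admissible k cs" "admissible k ds"
    and s_eq: "tl_equiv K s (Comp (cups k cs) (caps k ds))"
    using s unfolding cup_cap_form_def by blast
  note typing = cups_typing[OF adm(1)] caps_typing[OF adm(2)]
  have tgt_t: "tgt t = k + 2 * length ds" using t(3) tl_equiv_typing[OF s_eq] typing by simp
  have "tl_equiv K (Comp s t) (Comp (Comp (cups k cs) (caps k ds)) t)"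
    using s_eq t by (intro tl_equiv_compR) auto
  also have "tl_equiv K \<dots> (Comp (cups k cs) (Comp (caps k ds) t))"
    using typing t tgt_t by (intro tl_equiv_sym[OF tl_assoc]) auto
  finally show ?thesis
    using zero_or_cup_cap_form_comp_cups[OF adm(1)]
      zero_or_cup_cap_form_comp_caps[OF adm(2) t(1,2) tgt_t]
      zero_or_cup_cap_form_equiv typing t(2) tgt_t
    by simp
qed

lemma cup_cap_form_tens:
  assumes s: "cup_cap_form s" and t: "cup_cap_form t"
  shows "cup_cap_form (Tens s t)"
proof -
  obtain k1 cs1 ds1 where S: "admissible k1 cs1" "admissible k1 ds1"
    "tl_equiv K s (Comp (cups k1 cs1) (caps k1 ds1))"
    using s unfolding cup_cap_form_def by blast
  obtain k2 cs2 ds2 where T: "admissible k2 cs2" "admissible k2 ds2"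
    "tl_equiv K t (Comp (cups k2 cs2) (caps k2 ds2))"
    using t unfolding cup_cap_form_def by blast
  note typing = cups_typing[OF S(1)] caps_typing[OF S(2)] cups_typing[OF T(1)] caps_typing[OF T(2)]
  let ?cs = "map ((+) (k1 + 2 * length cs1)) cs2 @ cs1"
  let ?ds = "map ((+) (k1 + 2 * length ds1)) ds2 @ ds1"
  have "tl_equiv K (Tens s t)
      (Tens (Comp (cups k1 cs1) (caps k1 ds1)) (Comp (cups k2 cs2) (caps k2 ds2)))"
    using S T by (intro tl_equiv_tens)
  also have "tl_equiv K \<dots>
      (Comp (Tens (cups k1 cs1) (cups k2 cs2)) (Tens (caps k1 ds1) (caps k2 ds2)))"
    using typing by (intro tl_interchange) auto
  also have "tl_equiv K \<dots> (Comp (cups (k1 + k2) ?cs) (caps (k1 + k2) ?ds))"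
    using cups_tens[OF S(1) T(1)] caps_tens[OF S(2) T(2)] typing by (intro tl_equiv_comp) auto
  finally show ?thesis
    using S T admissible_shift[OF T(1), of "k1 + 2 * length cs1"]
      admissible_shift[OF T(2), of "k1 + 2 * length ds1"]
    by (intro cup_cap_formI) (auto simp: admissible_append admissible_widen ac_simps)
qed

lemma tl_zero_or_cup_cap_form: "well_typed t \<Longrightarrow> zero_or_cup_cap_form t"
proof (induction t)
  case (Comp g f)
  then show ?case
    using cup_cap_form_comp[of g f] tl_zero_compR[where s = g and f = f] by auto
next
  case (Tens f g)
  then show ?case
    using cup_cap_form_tens tl_zero_tensL[where s = g and g = f]
      tl_zero_tensR[where s = f and g = g]
    by auto
qed (auto intro: cup_cap_form_no_cap cup_cap_form_no_cup)

section \<open>Canonical order of cups and of caps\<close>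

text \<open>Far-apart cups commute, so the positions of a cup diagram can be brought into the
  order \<open>i \<le> j + 1\<close> for consecutive entries; then the topmost cup creates the leftmost
  occurrence of \<open>0 1\<close> in the output word, which makes the positions recoverable.\<close>

abbreviation canonical :: "nat list \<Rightarrow> bool" where
  "canonical \<equiv> successively (\<lambda>i j. i \<le> Suc j)"

fun canon_insert :: "nat \<Rightarrow> nat list \<Rightarrow> nat list" where
  "canon_insert i [] = [i]"
| "canon_insert i (j # cs) =
    (if i \<le> j + 1 then i # j # cs else j # canon_insert (i - 2) cs)"

fun canonicalise :: "nat list \<Rightarrow> nat list" where
  "canonicalise [] = []"
| "canonicalise (i # cs) = canon_insert i (canonicalise cs)"

lemma length_canon_insert [simp]: "length (canon_insert i cs) = Suc (length cs)"
  by (induction cs arbitrary: i) auto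

lemma hd_canon_insert: "canon_insert i cs = x # r \<Longrightarrow> x = i \<or> (cs \<noteq> [] \<and> x = hd cs)"
  by (cases cs) (auto split: if_splits)

lemma canonical_canon_insert: "canonical cs \<Longrightarrow> canonical (canon_insert i cs)"
proof (induction cs arbitrary: i)
  case (Cons j cs)
  show ?case
  proof (cases "i \<le> j + 1")
    case False
    have cs: "canonical cs" using Cons.prems by (auto simp: successively_Cons)
    obtain x r where xr: "canon_insert (i - 2) cs = x # r"
      using length_canon_insert[of "i - 2" cs] by (cases "canon_insert (i - 2) cs") auto
    then have "j \<le> x + 1"
      using hd_canon_insert[OF xr] False Cons.prems by (auto simp: successively_Cons)
    then show ?thesis using False Cons.IH[OF cs, of "i - 2"] xr by (simp add: successively_Cons)
  qed (use Cons in simp)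
qed simp

lemma admissible_canon_insert:
  "admissible n cs \<Longrightarrow> i \<le> n + 2 * length cs \<Longrightarrow> admissible n (canon_insert i cs)"
  by (induction cs arbitrary: i) auto

lemma canonicalise_props:
  "admissible n cs \<Longrightarrow>
    admissible n (canonicalise cs) \<and> canonical (canonicalise cs)
    \<and> length (canonicalise cs) = length cs"
  by (induction cs) (auto intro: admissible_canon_insert canonical_canon_insert)

lemma cups_canon_insert:
  "admissible n cs \<Longrightarrow> i \<le> n + 2 * length cs \<Longrightarrow>
    tl_equiv K (cups n (i # cs)) (cups n (canon_insert i cs))"
proof (induction cs arbitrary: i)
  case Nil
  then show ?case using cups_typing[of n "[i]"] by (simp add: tl_equiv_refl)
next
  case (Cons j cs)
  let ?w = "n + 2 * length cs"
  have adm: "admissible n cs" "j \<le> ?w" using Cons.prems by auto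
  note typing = cups_typing[OF adm(1)]
  show ?case
  proof (cases "i \<le> j + 1")
    case True
    then show ?thesis using cups_typing[OF Cons.prems(1)] Cons.prems by (simp add: tl_equiv_refl)
  next
    case False
    have "tl_equiv K (cups n (i # j # cs))
        (Comp (Comp (pad Cup i (?w + 2 - i)) (pad Cup j (?w - j))) (cups n cs))"
      using typing adm Cons.prems by (simp add: tl_assoc)
    also have "tl_equiv K \<dots>
        (Comp (Comp (pad Cup j (?w + 2 - j)) (pad Cup (i - 2) (?w + 2 - i))) (cups n cs))"
      using cups_commute[of j i ?w] False Cons.prems typing adm by (intro tl_equiv_compR) auto
    also have "tl_equiv K \<dots> (Comp (pad Cup j (?w + 2 - j)) (cups n ((i - 2) # cs)))"
    proof -
      have "?w + 2 - i = n + 2 * length cs - (i - 2)" using False by simp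
      then show ?thesis using typing adm Cons.prems False by (simp add: tl_equiv_sym tl_assoc)
    qed
    also have "tl_equiv K \<dots> (Comp (pad Cup j (?w + 2 - j)) (cups n (canon_insert (i - 2) cs)))"
      using Cons.IH[OF adm(1), of "i - 2"] Cons.prems False typing adm
        cups_typing[of n "(i - 2) # cs"]
      by (intro tl_equiv_compL) auto
    finally show ?thesis using False by simp
  qed
qed

lemma caps_canon_insert:
  "admissible n ds \<Longrightarrow> i \<le> n + 2 * length ds \<Longrightarrow>
    tl_equiv K (caps n (i # ds)) (caps n (canon_insert i ds))"
proof (induction ds arbitrary: i)
  case Nil
  then show ?case using caps_typing[of n "[i]"] by (simp add: tl_equiv_refl)
next
  case (Cons j ds)
  let ?w = "n + 2 * length ds"
  have adm: "admissible n ds" "j \<le> ?w" using Cons.prems by auto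
  note typing = caps_typing[OF adm(1)]
  show ?case
  proof (cases "i \<le> j + 1")
    case True
    then show ?thesis using caps_typing[OF Cons.prems(1)] Cons.prems by (simp add: tl_equiv_refl)
  next
    case False
    have "tl_equiv K (caps n (i # j # ds))
        (Comp (caps n ds) (Comp (pad Cap j (?w - j)) (pad Cap i (?w + 2 - i))))"
      using typing adm Cons.prems by (simp add: tl_equiv_sym tl_assoc)
    also have "tl_equiv K \<dots>
        (Comp (caps n ds) (Comp (pad Cap (i - 2) (?w + 2 - i)) (pad Cap j (?w + 2 - j))))"
      using caps_commute[of j i ?w] False Cons.prems typing adm by (intro tl_equiv_compL) auto
    also have "tl_equiv K \<dots> (Comp (caps n ((i - 2) # ds)) (pad Cap j (?w + 2 - j)))"
    proof -
      have "?w + 2 - i = n + 2 * length ds - (i - 2)" using False by simp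
      then show ?thesis using typing adm Cons.prems False by (simp add: tl_assoc)
    qed
    also have "tl_equiv K \<dots> (Comp (caps n (canon_insert (i - 2) ds)) (pad Cap j (?w + 2 - j)))"
      using Cons.IH[OF adm(1), of "i - 2"] Cons.prems False caps_typing[of n "(i - 2) # ds"] adm
      by (intro tl_equiv_compR) auto
    finally show ?thesis using False by simp
  qed
qed

lemma cups_canonicalise: "admissible n cs \<Longrightarrow> tl_equiv K (cups n cs) (cups n (canonicalise cs))"
proof (induction cs)
  case (Cons i cs)
  have adm: "admissible n cs" "i \<le> n + 2 * length cs" using Cons.prems by auto
  note canon = canonicalise_props[OF adm(1)]
  have "tl_equiv K (cups n (i # cs)) (cups n (i # canonicalise cs))"
    using Cons.IH[OF adm(1)] canon adm cups_typing[OF adm(1)] by (simp add: tl_equiv_compL)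
  also have "tl_equiv K \<dots> (cups n (canon_insert i (canonicalise cs)))"
    using canon adm by (intro cups_canon_insert) auto
  finally show ?case by simp
qed (simp add: tl_equiv_refl)

lemma caps_canonicalise: "admissible n ds \<Longrightarrow> tl_equiv K (caps n ds) (caps n (canonicalise ds))"
proof (induction ds)
  case (Cons i ds)
  have adm: "admissible n ds" "i \<le> n + 2 * length ds" using Cons.prems by auto
  note canon = canonicalise_props[OF adm(1)]
  have "tl_equiv K (caps n (i # ds)) (caps n (i # canonicalise ds))"
    using Cons.IH[OF adm(1)] canon adm caps_typing[OF adm(1)] by (simp add: tl_equiv_compR)
  also have "tl_equiv K \<dots> (caps n (canon_insert i (canonicalise ds)))"
    using canon adm by (intro caps_canon_insert) auto
  finally show ?case by simp
qed (simp add: tl_equiv_refl)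

section \<open>Cup-cap normal forms are determined by their action on words\<close>

definition ins01 :: "nat \<Rightarrow> nat list \<Rightarrow> nat list" where
  "ins01 i w = take i w @ [0, 1] @ drop i w"

fun ins01_list :: "nat list \<Rightarrow> nat list \<Rightarrow> nat list" where
  "ins01_list [] w = w"
| "ins01_list (i # cs) w = ins01 i (ins01_list cs w)"

lemma length_ins01 [simp]: "i \<le> length w \<Longrightarrow> length (ins01 i w) = length w + 2"
  by (simp add: ins01_def)

lemma length_ins01_list:
  "admissible k cs \<Longrightarrow> length w = k \<Longrightarrow> length (ins01_list cs w) = k + 2 * length cs"
  by (induction cs) auto

lemma nth_ins01:
  "i \<le> length w \<Longrightarrow> q < length w + 2 \<Longrightarrow>
    ins01 i w ! q =
      (if q < i then w ! q else if q = i then 0 else if q = i + 1 then 1 else w ! (q - 2))"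
  by (auto simp: ins01_def nth_append min_def)

lemma ins01_inj: "length a = length b \<Longrightarrow> ins01 i a = ins01 i b \<Longrightarrow> a = b"
  unfolding ins01_def
  by (metis append_eq_append_conv append_take_drop_id length_take same_append_eq)

lemma ins01_list_inj:
  "admissible k ds \<Longrightarrow> length z = k \<Longrightarrow> length z' = k \<Longrightarrow> ins01_list ds z = ins01_list ds z' \<Longrightarrow>
    z = z'"
proof (induction ds)
  case (Cons i ds)
  then show ?case using ins01_inj length_ins01_list[of k ds z] length_ins01_list[of k ds z'] by auto
qed simp

lemma count_list_ins01_list: "count_list (ins01_list ds z) 2 = count_list z 2"
proof (induction ds)
  case (Cons i ds)
  have "count_list (ins01 i w) 2 = count_list w 2" for w :: "nat list"
    using count_list_append[of "take i w" "drop i w" 2] by (simp add: ins01_def)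
  then show ?case using Cons by simp
qed simp

lemma sem_pad_Cup: "sem (pad Cup p q) w = (if length w = p + q then Some (ins01 p w) else None)"
  by (auto simp: pad_def ins01_def split: option.splits)

lemma sem_pad_Cap: "sem (pad Cap p q) w = Some v \<longleftrightarrow> length v = p + q \<and> w = ins01 p v"
proof
  assume "sem (pad Cap p q) w = Some v"
  then have w: "length (take p w) = p" "take 2 (drop p w) = [0, 1]"
    "length (drop 2 (drop p w)) = q" "v = take p w @ drop 2 (drop p w)"
    by (auto simp: pad_def split: option.splits if_splits)
  have "w = take p w @ take 2 (drop p w) @ drop 2 (drop p w)" by (simp only: append_take_drop_id)
  then show "length v = p + q \<and> w = ins01 p v" using w by (simp add: ins01_def)
next
  assume "length v = p + q \<and> w = ins01 p v"
  then show "sem (pad Cap p q) w = Some v"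
    by (auto simp: pad_def ins01_def split: option.splits)
qed

lemma sem_cups:
  "admissible n cs \<Longrightarrow> sem (cups n cs) w = (if length w = n then Some (ins01_list cs w) else None)"
  by (induction cs) (auto simp: sem_pad_Cup length_ins01_list split: option.splits)

lemma sem_caps:
  "admissible n ds \<Longrightarrow> sem (caps n ds) w = Some v \<longleftrightarrow> length v = n \<and> w = ins01_list ds v"
proof (induction ds arbitrary: w)
  case (Cons i ds)
  then have adm: "admissible n ds" "i \<le> n + 2 * length ds" by auto
  show ?case
  proof
    assume "sem (caps n (i # ds)) w = Some v"
    then obtain u where
      "sem (pad Cap i (n + 2 * length ds - i)) w = Some u" "sem (caps n ds) u = Some v"
      by (auto split: option.splits)
    then show "length v = n \<and> w = ins01_list (i # ds) v"
      using Cons.IH[OF adm(1)] sem_pad_Cap by auto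
  next
    assume v: "length v = n \<and> w = ins01_list (i # ds) v"
    then have "sem (pad Cap i (n + 2 * length ds - i)) w = Some (ins01_list ds v)"
      using sem_pad_Cap length_ins01_list[OF adm(1)] adm by auto
    moreover have "sem (caps n ds) (ins01_list ds v) = Some v" using Cons.IH[OF adm(1)] v by auto
    ultimately show "sem (caps n (i # ds)) w = Some v" by simp
  qed
qed auto

lemma sem_cups_caps:
  assumes "admissible k cs" "admissible k ds"
  shows "sem (Comp (cups k cs) (caps k ds)) u = Some v
    \<longleftrightarrow> (\<exists>z. length z = k \<and> u = ins01_list ds z \<and> v = ins01_list cs z)"
proof
  assume "sem (Comp (cups k cs) (caps k ds)) u = Some v"
  then obtain z where "sem (caps k ds) u = Some z" "sem (cups k cs) z = Some v"
    by (auto split: option.splits)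
  then show "\<exists>z. length z = k \<and> u = ins01_list ds z \<and> v = ins01_list cs z"
    using sem_caps[OF assms(2)] sem_cups[OF assms(1)] by (auto split: if_splits)
next
  assume "\<exists>z. length z = k \<and> u = ins01_list ds z \<and> v = ins01_list cs z"
  then obtain z where z: "length z = k" "u = ins01_list ds z" "v = ins01_list cs z" by blast
  then have "sem (caps k ds) u = Some z" using sem_caps[OF assms(2)] by simp
  then show "sem (Comp (cups k cs) (caps k ds)) u = Some v" using sem_cups[OF assms(1)] z by simp
qed

definition wild_match :: "nat list \<Rightarrow> nat list \<Rightarrow> bool" where
  "wild_match b x \<longleftrightarrow> length b = length x \<and> (\<forall>i<length b. b ! i \<noteq> 2 \<longrightarrow> x ! i = b ! i)"

lemma wild_match_antisym: "wild_match b x \<Longrightarrow> wild_match x b \<Longrightarrow> b = x"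
  unfolding wild_match_def by (metis nth_equalityI)

lemma wild_match_ins01: "wild_match b x \<Longrightarrow> j \<le> length b \<Longrightarrow> wild_match (ins01 j b) (ins01 j x)"
  unfolding wild_match_def by (auto simp: nth_ins01)

lemma wild_match_ins01_list:
  "admissible k ds \<Longrightarrow> length z = k \<Longrightarrow>
    wild_match (ins01_list ds (replicate k 2)) (ins01_list ds z)"
proof (induction ds)
  case (Cons i ds)
  then show ?case using wild_match_ins01 length_ins01_list[of k ds "replicate k 2"] by auto
qed (simp add: wild_match_def)

lemma canonical_first_01:
  "canonical (i # cs) \<Longrightarrow> admissible k (i # cs) \<Longrightarrow> w = ins01_list (i # cs) (replicate k 2) \<Longrightarrow>
    w ! i = 0 \<and> w ! (i + 1) = 1 \<and> (\<forall>q<i. \<not> (w ! q = 0 \<and> w ! (q + 1) = 1))"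
proof (induction cs arbitrary: i w)
  case (Cons j cs)
  let ?w = "ins01_list (j # cs) (replicate k 2)"
  have ij: "canonical (j # cs)" "i \<le> j + 1" using Cons.prems by auto
  have adm: "admissible k (j # cs)" "i \<le> length ?w"
    using Cons.prems length_ins01_list[of k "j # cs" "replicate k 2"] by auto
  have IH: "\<forall>q<j. \<not> (?w ! q = 0 \<and> ?w ! (q + 1) = 1)"
    using Cons.IH[OF ij(1) adm(1)] by simp
  have "\<not> (ins01 i ?w ! q = 0 \<and> ins01 i ?w ! (q + 1) = 1)" if "q < i" for q
  proof (cases "q + 1 < i")
    case True
    then show ?thesis using IH ij(2) adm(2) by (auto simp: nth_ins01)
  next
    case False
    then have "q + 1 = i" using that by simp
    then show ?thesis using adm(2) by (auto simp: nth_ins01)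
  qed
  then show ?case using Cons.prems(3) adm(2) by (simp add: nth_ins01)
qed (auto simp: nth_ins01)

lemma canonical_ins01_list_inj:
  "canonical cs \<Longrightarrow> canonical cs' \<Longrightarrow> admissible k cs \<Longrightarrow> admissible k cs' \<Longrightarrow>
    length cs = length cs' \<Longrightarrow> ins01_list cs (replicate k 2) = ins01_list cs' (replicate k 2) \<Longrightarrow>
    cs = cs'"
proof (induction cs arbitrary: cs')
  case (Cons i cs)
  obtain i' cs'' where cs': "cs' = i' # cs''" using Cons.prems(5) by (cases cs') auto
  let ?w = "ins01_list (i # cs) (replicate k 2)"
  have "?w ! i = 0 \<and> ?w ! (i + 1) = 1 \<and> (\<forall>q<i. \<not> (?w ! q = 0 \<and> ?w ! (q + 1) = 1))"
    "?w ! i' = 0 \<and> ?w ! (i' + 1) = 1 \<and> (\<forall>q<i'. \<not> (?w ! q = 0 \<and> ?w ! (q + 1) = 1))"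
    using canonical_first_01[OF Cons.prems(1,3)] canonical_first_01[of i' cs'' k] Cons.prems cs'
    by simp_all
  then have i': "i' = i" by (metis linorder_neqE_nat)
  have adm: "admissible k cs" "admissible k cs''" using Cons.prems cs' by auto
  have "ins01_list cs (replicate k 2) = ins01_list cs'' (replicate k 2)"
    using Cons.prems(5,6) cs' i' ins01_inj length_ins01_list[OF adm(1), of "replicate k 2"]
      length_ins01_list[OF adm(2), of "replicate k 2"]
    by auto
  then have "cs'' = cs" using Cons.IH[of cs''] Cons.prems cs' adm by (auto simp: successively_Cons)
  then show ?case using i' cs' by simp
qed simp

text \<open>The letter \<open>2\<close> is never inserted by a cup nor removed by a cap, so feeding
  \<open>2 \<dots> 2\<close> through the caps gives the most general input of a cup-cap normal form.\<close>

lemma cups_caps_sem_inj: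
  assumes adm: "admissible k cs" "admissible k ds" "admissible k' cs'" "admissible k' ds'"
    and canon: "canonical cs" "canonical ds" "canonical cs'" "canonical ds'"
    and sem_eq: "sem (Comp (cups k cs) (caps k ds)) = sem (Comp (cups k' cs') (caps k' ds'))"
  shows "k = k' \<and> cs = cs' \<and> ds = ds'"
proof -
  let ?r = "replicate k 2" and ?r' = "replicate k' 2"
  have io: "(\<exists>z. length z = k \<and> u = ins01_list ds z \<and> v = ins01_list cs z)
      \<longleftrightarrow> (\<exists>z. length z = k' \<and> u = ins01_list ds' z \<and> v = ins01_list cs' z)" for u v
    using sem_cups_caps[OF adm(1,2)] sem_cups_caps[OF adm(3,4)] sem_eq by metis
  obtain z' where z': "length z' = k'" "ins01_list ds ?r = ins01_list ds' z'"
    "ins01_list cs ?r = ins01_list cs' z'"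
    using io[of "ins01_list ds ?r" "ins01_list cs ?r"] by (metis length_replicate)
  obtain z where z: "length z = k" "ins01_list ds' ?r' = ins01_list ds z"
    using io[of "ins01_list ds' ?r'" "ins01_list cs' ?r'"] by (metis length_replicate)
  have ds_r: "ins01_list ds ?r = ins01_list ds' ?r'"
    using wild_match_ins01_list[OF adm(2) z(1)] wild_match_ins01_list[OF adm(4) z'(1)] z(2) z'(2)
    by (auto intro: wild_match_antisym)
  then have "count_list (ins01_list ds ?r) 2 = count_list (ins01_list ds' ?r') 2" by (rule arg_cong)
  moreover have "count_list (replicate n (2::nat)) 2 = n" for n by (induction n) auto
  ultimately have k': "k' = k" by (simp add: count_list_ins01_list)
  have z'_r: "z' = ?r" using ins01_list_inj[OF adm(4) z'(1), of ?r'] z'(2) ds_r k' by simp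
  have "length (ins01_list ds ?r) = length (ins01_list ds' ?r')" using ds_r by (rule arg_cong)
  then have ds_length: "length ds = length ds'"
    using length_ins01_list[OF adm(2), of ?r] length_ins01_list[OF adm(4), of ?r'] k' by simp
  have "length (ins01_list cs ?r) = length (ins01_list cs' z')" using z'(3) by (rule arg_cong)
  then have cs_length: "length cs = length cs'"
    using length_ins01_list[OF adm(1), of ?r] length_ins01_list[OF adm(3) z'(1)] k' by simp
  have "ds = ds'"
    using canonical_ins01_list_inj[OF canon(2,4) adm(2)] adm(4) k' ds_length ds_r by simp
  moreover have "cs = cs'"
    using canonical_ins01_list_inj[OF canon(1,3) adm(1)] adm(3) k' cs_length z'(3) z'_r by simp
  ultimately show ?thesis using k' by simp
qed

lemma no_cap_equiv_canonical_cups: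
  assumes "well_typed t" "no_cap t"
  obtains cs where "admissible (src t) cs" "canonical cs" "tl_equiv K t (cups (src t) cs)"
proof -
  obtain cs where cs: "admissible (src t) cs" "tgt t = src t + 2 * length cs"
    "tl_equiv K t (cups (src t) cs)"
    using no_cap_equiv_cups[OF assms] by blast
  show ?thesis
    using that[of "canonicalise cs"] cs canonicalise_props[OF cs(1)]
      tl_equiv_trans[OF cs(3) cups_canonicalise[OF cs(1)]] by simp
qed

lemma no_cup_equiv_canonical_caps:
  assumes "well_typed t" "no_cup t"
  obtains ds where "admissible (tgt t) ds" "canonical ds" "tl_equiv K t (caps (tgt t) ds)"
proof -
  obtain ds where ds: "admissible (tgt t) ds" "src t = tgt t + 2 * length ds"
    "tl_equiv K t (caps (tgt t) ds)"
    using no_cup_equiv_caps[OF assms] by blast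
  show ?thesis
    using that[of "canonicalise ds"] ds canonicalise_props[OF ds(1)]
      tl_equiv_trans[OF ds(3) caps_canonicalise[OF ds(1)]] by simp
qed

lemma cup_cap_factorisation_exists:
  assumes "typed x m n" "tl_nonzero K m n x"
  obtains k a b where "typed a k n" "no_cap a" "tl_nonzero K k n a"
    "typed b m k" "no_cup b" "tl_nonzero K m k b" "tl_eq K m n x (Comp a b)"
proof -
  have x: "well_typed x" "src x = m" "tgt x = n" "\<not> tl_zero K x"
    using assms by (auto simp: typed_iff tl_nonzero_iff)
  obtain k cs ds where adm: "admissible k cs" "admissible k ds"
    and x_eq: "tl_equiv K x (Comp (cups k cs) (caps k ds))"
    using tl_zero_or_cup_cap_form[OF x(1)] x(4) unfolding cup_cap_form_def by blast
  note typing = cups_typing[OF adm(1)] caps_typing[OF adm(2)]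
  have "\<not> tl_zero K (cups k cs)" "\<not> tl_zero K (caps k ds)"
    using tl_zero_compR[where s = "cups k cs" and f = "caps k ds"]
      tl_zero_compL[where s = "caps k ds" and g = "cups k cs"]
      tl_zero_equiv[OF x_eq] typing x(4) by auto
  moreover have "typed (cups k cs) k n" "typed (caps k ds) m k"
    using typing tl_equiv_typing[OF x_eq] x by (auto simp: typed_iff)
  ultimately show ?thesis
    using that[of "cups k cs" k "caps k ds"] x_eq assms(1) typed.intros(4)
    by (simp add: tl_nonzero_iff tl_eq_iff_tl_equiv no_cap_cups no_cup_caps)
qed

lemma cup_cap_factorisation_unique:
  assumes a: "typed a k n" "no_cap a" and b: "typed b m k" "no_cup b"
    and a': "typed a' k' n" "no_cap a'" and b': "typed b' m k'" "no_cup b'"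
    and sem_eq: "sem (Comp a b) = sem (Comp a' b')"
  shows "k' = k \<and> tl_eq K k n a' a \<and> tl_eq K m k b' b"
proof -
  have typing: "well_typed a" "src a = k" "well_typed b" "tgt b = k"
    "well_typed a'" "src a' = k'" "well_typed b'" "tgt b' = k'"
    using a b a' b' by (auto simp: typed_iff)
  obtain cs where cs: "admissible k cs" "canonical cs" "tl_equiv K a (cups k cs)"
    using no_cap_equiv_canonical_cups[OF typing(1) a(2)] typing by metis
  obtain ds where ds: "admissible k ds" "canonical ds" "tl_equiv K b (caps k ds)"
    using no_cup_equiv_canonical_caps[OF typing(3) b(2)] typing by metis
  obtain cs' where cs': "admissible k' cs'" "canonical cs'" "tl_equiv K a' (cups k' cs')"
    using no_cap_equiv_canonical_cups[OF typing(5) a'(2)] typing by metis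
  obtain ds' where ds': "admissible k' ds'" "canonical ds'" "tl_equiv K b' (caps k' ds')"
    using no_cup_equiv_canonical_caps[OF typing(7) b'(2)] typing by metis
  have "sem (Comp (cups k cs) (caps k ds)) = sem (Comp (cups k' cs') (caps k' ds'))"
    using sem_eq tl_equiv_sem[OF tl_equiv_comp[OF cs(3) ds(3)]]
      tl_equiv_sem[OF tl_equiv_comp[OF cs'(3) ds'(3)]] typing by simp
  then have "k = k' \<and> cs = cs' \<and> ds = ds'"
    using cups_caps_sem_inj[OF cs(1) ds(1) cs'(1) ds'(1) cs(2) ds(2) cs'(2) ds'(2)] by blast
  then have "tl_equiv K a' a" "tl_equiv K b' b"
    using cs(3) cs'(3) ds(3) ds'(3) tl_equiv_sym tl_equiv_trans by metis+
  then show ?thesis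
    using a b a' b' \<open>k = k' \<and> cs = cs' \<and> ds = ds'\<close> by (simp add: tl_eq_iff_tl_equiv)
qed

end

theorem mainTheorem16:
  fixes K :: "'k::field itself" and x :: tm and m n :: nat
  assumes "typed x m n" and "tl_nonzero K m n x"
  shows "\<exists>k a b. typed a k n \<and> no_cap a \<and> tl_nonzero K k n a
           \<and> typed b m k \<and> no_cup b \<and> tl_nonzero K m k b
           \<and> tl_eq K m n x (Comp a b)
           \<and> (\<forall>k' a' b'. typed a' k' n \<and> no_cap a' \<and> tl_nonzero K k' n a'
                \<and> typed b' m k' \<and> no_cup b' \<and> tl_nonzero K m k' b'
                \<and> tl_eq K m n x (Comp a' b')
                \<longrightarrow> k' = k \<and> tl_eq K k n a' a \<and> tl_eq K m k b' b)"
proof -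
  obtain k a b where a: "typed a k n" "no_cap a" "tl_nonzero K k n a"
    and b: "typed b m k" "no_cup b" "tl_nonzero K m k b" and x: "tl_eq K m n x (Comp a b)"
    using cup_cap_factorisation_exists[OF assms] by blast
  have "k' = k \<and> tl_eq K k n a' a \<and> tl_eq K m k b' b"
    if "typed a' k' n" "no_cap a'" "typed b' m k'" "no_cup b'" "tl_eq K m n x (Comp a' b')"
    for k' a' b'
    using cup_cap_factorisation_unique[OF a(1,2) b(1,2) that(1-4)]
      tl_eq_sem[OF x] tl_eq_sem[OF that(5)] by simp
  then show ?thesis using a b x by blast
qed

end
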